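(* Let $g\in C^\omega(\mathbb{R})$ with $g(v)>0$ for $v>0$, and $\beta\in\mathbb{R}$. (1) Let $y=(\rho,r)$ be a toy tip solution and let $(0,s^* )$ be an interval on which $\rho>0$ (so $y(s)\in M_1$). Fix $s_1\in(0,s^* )$ and let $\tau_y$ solve $\frac{d\tau_y}{ds}=\frac{\rho}{r}$, $\tau_y(s_1)=0$ on $(0,s^* )$. Then $\tau_y$ is a diffeomorphism onto its range, $\lim_{s\to0^+}\tau_y(s)=-\infty$, and $t\mapsto\Phi\big(y(\tau_y^{-1}(t))\big)$ is a toy $t$-tip solution. (2) Let $\hat y=(\eta,w)$ be a toy $t$-tip solution taking values in $N_0$, defined on an interval $J$ unbounded below. Let $(\hat\rho,\hat r)=\Phi^{-1}(\eta,w)$, fix $t_0\in J$ and let $\sigma$ solve $\frac{d\sigma}{dt}=\frac{\hat r}{\hat\rho}$, $\sigma(t_0)=0$. Then $\sigma$ is a diffeomorphism onto its range, $s_0:=\lim_{t\to-\infty}\sigma(t)$ is finite, and $s\mapsto(\hat\rho,\hat r)\big(\sigma^{-1}(s+s_0)\big)$ is a solution of the toy model satisfying the defining conditions of a toy tip solution.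
   Context: Toy model: $\rho'=\frac32\frac{1-\rho^2}{r}\Big(-1+\frac{\sqrt{1-\rho^2}(\beta r^2g(r^2)+\rho)}{r}\Big)$, $r'=\rho$ (prime $=d/ds$) on $M_0=(-1,1)\times\mathbb{R}_{>0}$. A toy tip solution is a solution $(\rho,r)$ on an interval $(0,s_{\max})$ with: (S1) $\lim_{s\to0^+}\rho=1$, $\lim r=0$, $\lim\sqrt{1-\rho^2}/r=\eta_0$ for some $\eta_0>0$; (S2) there exist $s_0>0$ and real-analytic $G:(-a,a)\to\mathbb{R}_{>0}$, $a=r(s_0)^2$, with $\rho(s)=G(r(s)^2)$ on $(0,s_0)$; and $\rho'<0,\rho>0$ on some $(0,s_0)$. $M_1=(0,1)\times\mathbb{R}_{>0}$; $N_1=\{(\eta,w)\in\mathbb{R}_{>0}\times\mathbb{R}:\eta^2w<1\}$; $N_0=\{(\eta,w)\in N_1: w>0\}$; $\Phi:M_1\to N_0$, $\Phi(\rho,r)=\big(\sqrt{1-\rho^2}/r,\ r^2\big)$ (a diffeomorphism). The $(\eta,w)$-system on $N_1$: $\frac{d\eta}{dt}=\frac{\eta}{2}\big(1-3\eta\sqrt{1-\eta^2w}\big)-\frac32\beta\eta^2wg(w)$, $\frac{dw}{dt}=2w$. A toy $t$-tip solution is a solution $(\eta,w)$ of this system, defined on an interval unbounded below, with (S'1) $\lim_{t\to-\infty}\eta(t)=1/3$, $\lim_{t\to-\infty}w(t)=0$, and (S'2) there exist $t_0$ and a real-analytic $G:(-a,a)\to\mathbb{R}$ with $a=w(t_0)$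 such that $\eta(t)=G(w(t))$ for all $t\in(-\infty,t_0)$. *)

theory Defs
  imports "HOL-Analysis.Analysis" "HOL-Library.Extended_Real"
begin

definition real_analytic_on :: "(real \<Rightarrow> real) \<Rightarrow> real set \<Rightarrow> bool" where
  "real_analytic_on G S \<longleftrightarrow>
     (\<forall>x\<in>S. \<exists>e>0. \<exists>c::nat \<Rightarrow> real.
        \<forall>y. \<bar>y - x\<bar> < e \<longrightarrow> (\<lambda>n. c n * (y - x) ^ n) sums G y)"

definition toy_rhs :: "real \<Rightarrow> (real \<Rightarrow> real) \<Rightarrow> real \<Rightarrow> real \<Rightarrow> real" where
  "toy_rhs \<beta> g \<rho> r =
     3/2 * (1 - \<rho>\<^sup>2) / r * (-1 + sqrt (1 - \<rho>\<^sup>2) * (\<beta> * r\<^sup>2 * g (r\<^sup>2) + \<rho>) / r)"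

definition eta_rhs :: "real \<Rightarrow> (real \<Rightarrow> real) \<Rightarrow> real \<Rightarrow> real \<Rightarrow> real" where
  "eta_rhs \<beta> g \<eta> w =
     \<eta> / 2 * (1 - 3 * \<eta> * sqrt (1 - \<eta>\<^sup>2 * w)) - 3/2 * \<beta> * \<eta>\<^sup>2 * w * g w"

definition M0 :: "(real \<times> real) set" where "M0 = {-1<..<1} \<times> {0<..}"
definition M1 :: "(real \<times> real) set" where "M1 = {0<..<1} \<times> {0<..}"
definition N1 :: "(real \<times> real) set" where "N1 = {(\<eta>, w). \<eta> > 0 \<and> \<eta>\<^sup>2 * w < 1}"
definition N0 :: "(real \<times> real) set" where "N0 = {(\<eta>, w). (\<eta>, w) \<in> N1 \<and> w > 0}"

definition Phi :: "real \<times> real \<Rightarrow> real \<times> real" where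
  "Phi = (\<lambda>(\<rho>, r). (sqrt (1 - \<rho>\<^sup>2) / r, r\<^sup>2))"

definition ivl0 :: "ereal \<Rightarrow> real set" where
  "ivl0 smax = {s. 0 < s \<and> ereal s < smax}"

definition toy_solution :: "real \<Rightarrow> (real \<Rightarrow> real) \<Rightarrow> (real \<Rightarrow> real) \<Rightarrow> (real \<Rightarrow> real) \<Rightarrow> real set \<Rightarrow> bool" where
  "toy_solution \<beta> g \<rho> r I \<longleftrightarrow>
     (\<forall>s\<in>I. (\<rho> s, r s) \<in> M0 \<and>
        (\<rho> has_real_derivative toy_rhs \<beta> g (\<rho> s) (r s)) (at s) \<and>
        (r has_real_derivative \<rho> s) (at s))"

definition toy_tip_solution :: "real \<Rightarrow> (real \<Rightarrow> real) \<Rightarrow> (real \<Rightarrow> real) \<Rightarrow> (real \<Rightarrow> real) \<Rightarrow> ereal \<Rightarrow> bool" where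
  "toy_tip_solution \<beta> g \<rho> r smax \<longleftrightarrow>
     0 < smax \<and> toy_solution \<beta> g \<rho> r (ivl0 smax) \<and>
     (\<rho> \<longlongrightarrow> 1) (at_right 0) \<and> (r \<longlongrightarrow> 0) (at_right 0) \<and>
     (\<exists>\<eta>0>0. ((\<lambda>s. sqrt (1 - (\<rho> s)\<^sup>2) / r s) \<longlongrightarrow> \<eta>0) (at_right 0)) \<and>
     (\<exists>s0. s0 \<in> ivl0 smax \<and>
        (\<exists>G. real_analytic_on G {-((r s0)\<^sup>2)<..<(r s0)\<^sup>2} \<and>
             (\<forall>v\<in>{-((r s0)\<^sup>2)<..<(r s0)\<^sup>2}. G v > 0) \<and>
             (\<forall>s\<in>{0<..<s0}. \<rho> s = G ((r s)\<^sup>2)))) \<and>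
     (\<exists>s0>0. ereal s0 \<le> smax \<and> (\<forall>s\<in>{0<..<s0}. deriv \<rho> s < 0 \<and> \<rho> s > 0))"

definition t_solution :: "real \<Rightarrow> (real \<Rightarrow> real) \<Rightarrow> (real \<Rightarrow> real) \<Rightarrow> (real \<Rightarrow> real) \<Rightarrow> real set \<Rightarrow> bool" where
  "t_solution \<beta> g \<eta> w J \<longleftrightarrow>
     (\<forall>t\<in>J. (\<eta> t, w t) \<in> N1 \<and>
        (\<eta> has_real_derivative eta_rhs \<beta> g (\<eta> t) (w t)) (at t) \<and>
        (w has_real_derivative 2 * w t) (at t))"

definition toy_t_tip_solution :: "real \<Rightarrow> (real \<Rightarrow> real) \<Rightarrow> (real \<Rightarrow> real) \<Rightarrow> (real \<Rightarrow> real) \<Rightarrow> real set \<Rightarrow> bool" where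
  "toy_t_tip_solution \<beta> g \<eta> w J \<longleftrightarrow>
     is_interval J \<and> open J \<and> J \<noteq> {} \<and> (\<forall>x. \<exists>t\<in>J. t < x) \<and>
     t_solution \<beta> g \<eta> w J \<and>
     (\<eta> \<longlongrightarrow> 1/3) at_bot \<and> (w \<longlongrightarrow> 0) at_bot \<and>
     (\<exists>t0\<in>J. \<exists>G. real_analytic_on G {-(w t0)<..<w t0} \<and>
        (\<forall>t\<in>J. t < t0 \<longrightarrow> \<eta> t = G (w t)))"

definition diffeo_onto_range :: "(real \<Rightarrow> real) \<Rightarrow> real set \<Rightarrow> bool" where
  "diffeo_onto_range f S \<longleftrightarrow>
     open (f ` S) \<and> inj_on f S \<and>
     (\<forall>x\<in>S. f differentiable (at x)) \<and> continuous_on S (deriv f) \<and>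
     (\<forall>y\<in>f ` S. the_inv_into S f differentiable (at y)) \<and>
     continuous_on (f ` S) (deriv (the_inv_into S f))"

end

theory Submission
  imports Defs "HOL-Complex_Analysis.Complex_Analysis"
begin

(*
  The map Phi (rho, r) = (eta, w) turns the toy model into the (eta, w)-system up to the time
  change dtau/ds = rho/r: along a toy solution deta/ds = (rho/r) * eta_rhs and dw/ds = (rho/r) * 2w,
  and conversely along an (eta, w)-solution drho/dt = (r/rho) * toy_rhs and dr/dt = (r/rho) * rho.
  Near the tip rho -> 1 and r(s) <= s, so tau' >= 1/(2s) and tau -> -infinity; in the other
  direction sigma - 2r is nonincreasing as t -> -infinity, so the increasing sigma has a finite
  limit.  Since eta converges while its derivative tends to eta_rhs (eta0, 0), eta0 (1 - 3 eta0) = 0,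
  i.e. eta0 = 1/3.  Analyticity is transported by eta^2 = (1 - G(w)^2) / w and
  rho = sqrt (1 - w * Ge(w)^2), using that real analytic functions are closed under the algebraic
  operations involved (via their holomorphic extensions).
*)

section \<open>Real analytic functions\<close>

lemma real_analytic_on_iff_pointwise:
  "real_analytic_on G S \<longleftrightarrow> (\<forall>x\<in>S. real_analytic_on G {x})"
  by (simp add: real_analytic_on_def)

lemma real_analytic_on_subset: "real_analytic_on G S \<Longrightarrow> T \<subseteq> S \<Longrightarrow> real_analytic_on G T"
  unfolding real_analytic_on_def by blast

lemma real_analytic_at_cong:
  assumes "real_analytic_on G {x}" "d > 0" "\<And>y. \<bar>y - x\<bar> < d \<Longrightarrow> G y = H y"
  shows "real_analytic_on H {x}"
proof -
  obtain e c where "e > 0" and c: "\<And>y. \<bar>y - x\<bar> < e \<Longrightarrow> (\<lambda>n. c n * (y - x) ^ n) sums G y"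
    using assms(1) unfolding real_analytic_on_def by blast
  have "(\<lambda>n. c n * (y - x) ^ n) sums H y" if "\<bar>y - x\<bar> < min e d" for y
    using c[of y] assms(3)[of y] that by simp
  then show ?thesis
    unfolding real_analytic_on_def using \<open>e > 0\<close> assms(2) by (intro ballI exI[of _ "min e d"]) force
qed

lemma real_analytic_on_holomorphic_extension:
  assumes "real_analytic_on G S" "x \<in> S"
  shows "\<exists>e>0. \<exists>f. f holomorphic_on ball (of_real x) e \<and>
           (\<forall>y. \<bar>y - x\<bar> < e \<longrightarrow> f (of_real y) = of_real (G y))"
proof -
  obtain e c where e: "e > 0" and c: "\<And>y. \<bar>y - x\<bar> < e \<Longrightarrow> (\<lambda>n. c n * (y - x) ^ n) sums G y"
    using assms unfolding real_analytic_on_def by blast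
  define p where "p = (\<lambda>u. suminf (\<lambda>n. complex_of_real (c n) * u ^ n))"
  have summable: "summable (\<lambda>n. complex_of_real (c n) * u ^ n)" if "norm u < e" for u
  proof -
    \<comment> \<open>compare with the real series at a point strictly between \<open>norm u\<close> and \<open>e\<close>\<close>
    define y where "y = x + (norm u + e) / 2"
    have "summable (\<lambda>n. complex_of_real (c n * (y - x) ^ n))"
      using c[of y] that norm_ge_zero[of u] unfolding y_def
      by (intro summable_of_real sums_summable) auto
    then have "summable (\<lambda>n. complex_of_real (c n) * complex_of_real (y - x) ^ n)"
      by simp
    moreover have "norm u < norm (complex_of_real (y - x))"
      unfolding norm_of_real y_def using that norm_ge_zero[of u] by simp
    ultimately show ?thesis by (rule powser_inside)
  qed
  have "p field_differentiable at u" if "norm u < e" for u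
    using termdiffs_strong'[of e "\<lambda>n. complex_of_real (c n)", OF summable that]
    unfolding p_def field_differentiable_def by blast
  then have "p holomorphic_on ball 0 e"
    by (simp add: holomorphic_on_def field_differentiable_at_within)
  moreover have "(\<lambda>z. z - complex_of_real x) holomorphic_on ball (of_real x) e"
    by (intro holomorphic_intros)
  moreover have "(\<lambda>z. z - complex_of_real x) ` ball (of_real x) e \<subseteq> ball 0 e"
    by (auto simp: dist_norm norm_minus_commute)
  ultimately have "(\<lambda>z. p (z - of_real x)) holomorphic_on ball (of_real x) e"
    using holomorphic_on_compose_gen[of "\<lambda>z. z - of_real x" _ p] by (simp add: o_def)
  moreover have "p (of_real y - of_real x) = of_real (G y)" if "\<bar>y - x\<bar> < e" for y
  proof -
    have "(\<lambda>n. complex_of_real (c n * (y - x) ^ n)) sums of_real (G y)"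
      using c[OF that] by (simp only: sums_of_real_iff)
    then have "(\<lambda>n. complex_of_real (c n) * (of_real y - of_real x) ^ n) sums of_real (G y)"
      by (simp only: of_real_mult of_real_power of_real_diff)
    then show ?thesis unfolding p_def by (rule sums_unique[symmetric])
  qed
  ultimately show ?thesis using e by blast
qed

lemma holomorphic_extension_imp_real_analytic_at:
  assumes e: "e > 0" and hol: "f holomorphic_on ball (of_real x) e"
    and f: "\<And>y. \<bar>y - x\<bar> < e \<Longrightarrow> f (of_real y) = of_real (G y)"
  shows "real_analytic_on G {x}"
proof -
  define a where "a = (\<lambda>n. (deriv ^^ n) f (of_real x) / fact n)"
  have "(\<lambda>n. Re (a n) * (y - x) ^ n) sums G y" if y: "\<bar>y - x\<bar> < e" for y
  proof -
    have "of_real y \<in> ball (complex_of_real x) e"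
      using y by (simp add: dist_norm abs_minus_commute flip: of_real_diff)
    from holomorphic_power_series[OF hol this]
    have "(\<lambda>n. a n * of_real ((y - x) ^ n)) sums of_real (G y)"
      unfolding a_def by (simp only: f[OF y] of_real_diff of_real_power)
    from sums_Re[OF this] show ?thesis by simp
  qed
  then show ?thesis
    unfolding real_analytic_on_def using e by (intro ballI exI[of _ e] conjI exI[of _ "\<lambda>n. Re (a n)"]) auto
qed

lemma real_analytic_on_binop:
  assumes G: "real_analytic_on G S" and H: "real_analytic_on H S"
    and hol: "\<And>f h U. f holomorphic_on U \<Longrightarrow> h holomorphic_on U \<Longrightarrow> (\<lambda>z. F (f z) (h z)) holomorphic_on U"
    and real: "\<And>a b. F (of_real a) (of_real b) = of_real (op a b)"
  shows "real_analytic_on (\<lambda>v. op (G v) (H v)) S"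
  unfolding real_analytic_on_iff_pointwise[of _ S]
proof
  fix x assume "x \<in> S"
  obtain e1 f where e1: "e1 > 0" "f holomorphic_on ball (of_real x) e1"
    and f: "\<And>y. \<bar>y - x\<bar> < e1 \<Longrightarrow> f (of_real y) = of_real (G y)"
    using real_analytic_on_holomorphic_extension[OF G \<open>x \<in> S\<close>] by blast
  obtain e2 h where e2: "e2 > 0" "h holomorphic_on ball (of_real x) e2"
    and h: "\<And>y. \<bar>y - x\<bar> < e2 \<Longrightarrow> h (of_real y) = of_real (H y)"
    using real_analytic_on_holomorphic_extension[OF H \<open>x \<in> S\<close>] by blast
  show "real_analytic_on (\<lambda>v. op (G v) (H v)) {x}"
  proof (rule holomorphic_extension_imp_real_analytic_at[of "min e1 e2" "\<lambda>z. F (f z) (h z)"])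
    show "(\<lambda>z. F (f z) (h z)) holomorphic_on ball (of_real x) (min e1 e2)"
      using e1(2) e2(2) by (intro hol) (auto elim!: holomorphic_on_subset)
  qed (use e1 e2 f h real in auto)
qed

lemma real_analytic_on_diff:
  "real_analytic_on G S \<Longrightarrow> real_analytic_on H S \<Longrightarrow> real_analytic_on (\<lambda>v. G v - H v) S"
  by (rule real_analytic_on_binop[where F = "(-)"]) (auto intro: holomorphic_intros)

lemma real_analytic_on_mult:
  "real_analytic_on G S \<Longrightarrow> real_analytic_on H S \<Longrightarrow> real_analytic_on (\<lambda>v. G v * H v) S"
  by (rule real_analytic_on_binop[where F = "(*)"]) (auto intro: holomorphic_intros)

lemma real_analytic_on_const: "real_analytic_on (\<lambda>_. c) S"
  unfolding real_analytic_on_iff_pointwise[of _ S]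
  by (auto intro: holomorphic_extension_imp_real_analytic_at[of 1 "\<lambda>_. of_real c"])

lemma real_analytic_on_ident: "real_analytic_on (\<lambda>v. v) S"
  unfolding real_analytic_on_iff_pointwise[of _ S]
  by (auto intro: holomorphic_extension_imp_real_analytic_at[of 1 "\<lambda>z. z"])

lemma real_analytic_on_imp_isCont:
  assumes "real_analytic_on G S" "x \<in> S"
  shows "isCont G x"
proof -
  obtain e f where e: "e > 0" "f holomorphic_on ball (of_real x) e"
    and f: "\<And>y. \<bar>y - x\<bar> < e \<Longrightarrow> f (of_real y) = of_real (G y)"
    using real_analytic_on_holomorphic_extension[OF assms] by blast
  have "isCont f (of_real x)"
    using e holomorphic_on_imp_continuous_on continuous_on_interior[of "ball (of_real x) e" f]
    by (simp add: interior_open)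
  then have "isCont (\<lambda>y. Re (f (of_real y))) x"
    by (intro isCont_Re continuous_at_compose[of x complex_of_real f, unfolded o_def]) auto
  moreover have "eventually (\<lambda>y. Re (f (of_real y)) = G y) (nhds x)"
    unfolding eventually_nhds_metric using e f by (intro exI[of _ e]) (auto simp: dist_real_def)
  ultimately show ?thesis by (simp only: isCont_cong)
qed

lemma real_analytic_on_compose_holomorphic:
  assumes G: "real_analytic_on G S"
    and \<phi>: "\<And>x. x \<in> S \<Longrightarrow> \<exists>d>0. \<phi> holomorphic_on ball (of_real (G x)) d \<and>
              (\<forall>a. \<bar>a - G x\<bar> < d \<longrightarrow> \<phi> (of_real a) = of_real (\<psi> a))"
  shows "real_analytic_on (\<lambda>v. \<psi> (G v)) S"
  unfolding real_analytic_on_iff_pointwise[of _ S]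
proof
  fix x assume x: "x \<in> S"
  obtain d where d: "d > 0" "\<phi> holomorphic_on ball (of_real (G x)) d"
    and \<psi>: "\<And>a. \<bar>a - G x\<bar> < d \<Longrightarrow> \<phi> (of_real a) = of_real (\<psi> a)"
    using \<phi>[OF x] by blast
  obtain e f where e: "e > 0" "f holomorphic_on ball (of_real x) e"
    and f: "\<And>y. \<bar>y - x\<bar> < e \<Longrightarrow> f (of_real y) = of_real (G y)"
    using real_analytic_on_holomorphic_extension[OF G x] by blast
  have "continuous_on (ball (of_real x) e) f"
    using e(2) by (rule holomorphic_on_imp_continuous_on)
  then have "isCont f (of_real x)"
    using e(1) by (simp add: continuous_on_interior interior_open)
  moreover have "f (of_real x) = of_real (G x)" using f e(1) by simp
  ultimately obtain e' where e': "e' > 0" "\<And>z. dist z (of_real x) < e' \<Longrightarrow> dist (f z) (of_real (G x)) < d"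
    using d(1) unfolding continuous_at_eps_delta by metis
  have maps: "f ` ball (of_real x) (min e e') \<subseteq> ball (of_real (G x)) d"
  proof (rule image_subsetI)
    fix z :: complex assume "z \<in> ball (of_real x) (min e e')"
    then have "dist z (of_real x) < e'" by (simp add: dist_commute)
    then show "f z \<in> ball (of_real (G x)) d" using e'(2) by (simp add: dist_commute)
  qed
  have sub: "ball (complex_of_real x) (min e e') \<subseteq> ball (of_real x) e" by (rule subset_ball) simp
  show "real_analytic_on (\<lambda>v. \<psi> (G v)) {x}"
  proof (rule holomorphic_extension_imp_real_analytic_at[of "min e e'" "\<lambda>z. \<phi> (f z)"])
    show "(\<lambda>z. \<phi> (f z)) holomorphic_on ball (of_real x) (min e e')"
      using holomorphic_on_compose_gen[OF holomorphic_on_subset[OF e(2) sub] d(2) maps]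
      by (simp add: o_def)
    fix y assume y: "\<bar>y - x\<bar> < min e e'"
    then have "dist (of_real y) (complex_of_real x) < e'" by (simp add: dist_real_def)
    then have "dist (f (of_real y)) (of_real (G x)) < d" by (rule e'(2))
    then have "dist (G y) (G x) < d" using f[of y] y by simp
    then show "\<phi> (f (of_real y)) = of_real (\<psi> (G y))"
      using f[of y] y \<psi>[of "G y"] by (simp add: dist_real_def)
  qed (use e e' in simp)
qed

lemma real_analytic_on_sqrt:
  assumes "real_analytic_on G S" "\<And>x. x \<in> S \<Longrightarrow> G x > 0"
  shows "real_analytic_on (\<lambda>v. sqrt (G v)) S"
proof (rule real_analytic_on_compose_holomorphic[OF assms(1)], intro exI conjI allI impI)
  fix x assume x: "x \<in> S"
  show "G x > 0" using assms(2)[OF x] .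
  \<comment> \<open>the disc of radius \<open>G x\<close> around \<open>G x\<close> avoids the branch cut of \<open>csqrt\<close>\<close>
  show "csqrt holomorphic_on ball (of_real (G x)) (G x)"
  proof (rule holomorphic_on_subset[OF holomorphic_on_csqrt], rule subsetI)
    fix z :: complex assume "z \<in> ball (of_real (G x)) (G x)"
    then have "G x - Re z < G x"
      using abs_Re_le_cmod[of "of_real (G x) - z"] by (simp add: dist_norm)
    then show "z \<in> - \<real>\<^sub>\<le>\<^sub>0" by (auto simp: nonpos_Reals_def Reals_def)
  qed
  fix a assume "\<bar>a - G x\<bar> < G x"
  then show "csqrt (of_real a) = of_real (sqrt a)" by (simp add: csqrt_of_real)
qed

lemma real_analytic_sqrt_near_0:
  assumes H: "real_analytic_on H {-a<..<a}" and "0 < a" "0 < H 0"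
  obtains b where "0 < b" "b \<le> a" "\<And>v. v \<in> {-b<..<b} \<Longrightarrow> 0 < H v"
    "real_analytic_on (\<lambda>v. sqrt (H v)) {-b<..<b}"
proof -
  have "isCont H 0" using H \<open>0 < a\<close> by (intro real_analytic_on_imp_isCont) auto
  then obtain d where d: "d > 0" "\<And>v. dist v 0 < d \<Longrightarrow> dist (H v) (H 0) < H 0"
    using \<open>0 < H 0\<close> unfolding continuous_at_eps_delta by blast
  define b where "b = min a d"
  have pos: "0 < H v" if "v \<in> {-b<..<b}" for v
  proof -
    have "\<bar>v\<bar> < d" using that by (auto simp: b_def)
    then have "\<bar>H v - H 0\<bar> < H 0" using d(2)[of v] by (simp add: dist_real_def)
    then show ?thesis by arith
  qed
  moreover have "real_analytic_on (\<lambda>v. sqrt (H v)) {-b<..<b}"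
    using pos by (intro real_analytic_on_sqrt real_analytic_on_subset[OF H]) (auto simp: b_def)
  moreover have "0 < b" "b \<le> a" using \<open>0 < a\<close> d(1) by (auto simp: b_def)
  ultimately show ?thesis using that by blast
qed

lemma real_analytic_on_inverse:
  assumes "real_analytic_on G S" "\<And>x. x \<in> S \<Longrightarrow> G x \<noteq> 0"
  shows "real_analytic_on (\<lambda>v. inverse (G v)) S"
proof (rule real_analytic_on_compose_holomorphic[OF assms(1)], intro exI conjI allI impI)
  fix x assume x: "x \<in> S"
  show "\<bar>G x\<bar> > 0" using assms(2)[OF x] by simp
  show "inverse holomorphic_on ball (of_real (G x)) \<bar>G x\<bar>"
    by (intro holomorphic_intros) (auto simp: dist_norm)
qed simp

lemma real_analytic_on_divide_by_ident:
  assumes F: "real_analytic_on F S" and "0 \<in> S" "F 0 = 0"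
  obtains H where "real_analytic_on H S" "\<And>v. v \<noteq> 0 \<Longrightarrow> H v = F v / v"
proof -
  obtain e c where e: "e > 0" and c: "\<And>y. \<bar>y - 0\<bar> < e \<Longrightarrow> (\<lambda>n. c n * (y - 0) ^ n) sums F y"
    using F \<open>0 \<in> S\<close> unfolding real_analytic_on_def by blast
  have "c 0 = 0"
    using c[of 0] e \<open>F 0 = 0\<close> by (simp add: sums_iff)
  define H where "H = (\<lambda>v. if v = 0 then c 1 else F v / v)"
  \<comment> \<open>at 0, \<open>H\<close> is the power series of \<open>F\<close> shifted by one\<close>
  have "real_analytic_on H {0}"
    unfolding real_analytic_on_def
  proof (intro ballI exI[of _ e] conjI exI[of _ "\<lambda>n. c (Suc n)"] allI impI)
    fix x y assume "x \<in> {0::real}" and y: "\<bar>y - x\<bar> < e"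
    show "(\<lambda>n. c (Suc n) * (y - x) ^ n) sums H y"
    proof (cases "y = 0")
      case True
      then show ?thesis using \<open>x \<in> {0}\<close> powser_sums_zero[of "\<lambda>n. c (Suc n)"] by (simp add: H_def)
    next
      case False
      have "(\<lambda>n. c (Suc n) * y ^ Suc n) sums F y"
        using c[of y] y \<open>x \<in> {0}\<close> \<open>c 0 = 0\<close> by (subst sums_Suc_iff) simp
      from sums_divide[OF this, of y] show ?thesis
        using False \<open>x \<in> {0}\<close> by (simp add: H_def)
    qed
  qed (use e in auto)
  moreover have "real_analytic_on H {x}" if "x \<in> S" "x \<noteq> 0" for x
  proof -
    have "real_analytic_on (\<lambda>v. F v * inverse v) {x}"
      using real_analytic_on_subset[OF F] that
      by (intro real_analytic_on_mult real_analytic_on_inverse real_analytic_on_ident) auto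
    then show ?thesis
      by (rule real_analytic_at_cong[of _ _ "\<bar>x\<bar>"]) (use that in \<open>auto simp: H_def field_simps\<close>)
  qed
  ultimately have "real_analytic_on H S"
    unfolding real_analytic_on_iff_pointwise[of _ S] by blast
  then show ?thesis using that by (auto simp: H_def)
qed

section \<open>Intervals and monotone diffeomorphisms\<close>

lemma strict_mono_on_of_deriv_pos:
  fixes f f' :: "real \<Rightarrow> real"
  assumes "is_interval S" "\<And>x. x \<in> S \<Longrightarrow> (f has_real_derivative f' x) (at x)"
    and "\<And>x. x \<in> S \<Longrightarrow> f' x > 0"
  shows "strict_mono_on S f"
proof (rule strict_mono_onI)
  fix x y assume xy: "x \<in> S" "y \<in> S" "x < y"
  show "f x < f y"
  proof (rule DERIV_pos_imp_increasing[OF \<open>x < y\<close>])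
    fix z assume "x \<le> z" "z \<le> y"
    then have "z \<in> S" using assms(1) xy unfolding is_interval_1 by blast
    then show "\<exists>D. (f has_real_derivative D) (at z) \<and> 0 < D" using assms(2,3) by blast
  qed
qed

lemma has_real_derivative_the_inv_into:
  fixes f :: "real \<Rightarrow> real"
  assumes "open S" "inj_on f S" "continuous_on S f" "x \<in> S"
    and "(f has_real_derivative f') (at x)" "f' \<noteq> 0"
  shows "(the_inv_into S f has_real_derivative inverse f') (at (f x))"
  using has_field_derivative_inverse_strong[OF assms(5,6,1,4,3)] the_inv_into_f_f[OF assms(2)] by blast

lemma diffeo_onto_range_of_deriv_pos:
  fixes f f' :: "real \<Rightarrow> real"
  assumes S: "is_interval S" "open S"
    and der: "\<And>x. x \<in> S \<Longrightarrow> (f has_real_derivative f' x) (at x)"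
    and pos: "\<And>x. x \<in> S \<Longrightarrow> f' x > 0"
    and cont: "continuous_on S f'"
  shows "diffeo_onto_range f S"
proof -
  define g where "g = the_inv_into S f"
  have inj: "inj_on f S"
    using strict_mono_on_of_deriv_pos[OF S(1) der pos] by (rule strict_mono_on_imp_inj_on)
  have fc: "continuous_on S f"
    using der by (intro continuous_at_imp_continuous_on ballI) (auto intro: DERIV_isCont)
  have gS: "g y \<in> S" and fg: "f (g y) = y" if "y \<in> f ` S" for y
    using that the_inv_into_into[OF inj] f_the_inv_into_f[OF inj] unfolding g_def by auto
  have gder: "(g has_real_derivative inverse (f' (g y))) (at y)" if "y \<in> f ` S" for y
    using has_real_derivative_the_inv_into[OF S(2) inj fc gS[OF that] der[OF gS[OF that]]]
      pos[OF gS[OF that]] fg[OF that] unfolding g_def by simp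
  then have gc: "continuous_on (f ` S) g"
    by (intro continuous_at_imp_continuous_on ballI) (auto intro: DERIV_isCont)
  have "continuous_on (f ` S) (\<lambda>y. inverse (f' (g y)))"
    using gc gS pos by (intro continuous_on_inverse continuous_on_compose2[OF cont]) force+
  then have "continuous_on (f ` S) (deriv g)"
    by (rule continuous_on_cong[THEN iffD1, rotated 2]) (auto intro!: DERIV_imp_deriv[symmetric] gder)
  moreover have "continuous_on S (deriv f)"
    using cont by (rule continuous_on_cong[THEN iffD1, rotated 2]) (auto intro!: DERIV_imp_deriv[symmetric] der)
  moreover have "open (f ` S)"
    using invariance_of_domain[OF fc S(2) inj] .
  ultimately show ?thesis
    unfolding diffeo_onto_range_def g_def[symmetric] using inj der gder
    by (auto simp: real_differentiable_def)
qed

lemma is_interval_continuous_image: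
  fixes f :: "real \<Rightarrow> real"
  shows "is_interval S \<Longrightarrow> continuous_on S f \<Longrightarrow> is_interval (f ` S)"
  by (simp add: is_interval_connected_1 connected_continuous_image)

lemma is_interval_ivl0: "is_interval (ivl0 smax)"
  unfolding is_interval_1 ivl0_def
  by (metis (mono_tags, lifting) ereal_less_eq(3) le_less_trans less_le_trans mem_Collect_eq)

lemma open_ivl0: "open (ivl0 smax)"
proof (cases smax)
  case (real a)
  then have "ivl0 smax = {0<..<a}" unfolding ivl0_def by auto
  then show ?thesis by simp
next
  case PInf
  then have "ivl0 smax = {0<..}" unfolding ivl0_def by auto
  then show ?thesis by simp
next
  case MInf
  then have "ivl0 smax = {}" unfolding ivl0_def by auto
  then show ?thesis by simp
qed

lemma ivl0_downward_closed: "x \<in> ivl0 smax \<Longrightarrow> 0 < y \<Longrightarrow> y \<le> x \<Longrightarrow> y \<in> ivl0 smax"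
  unfolding ivl0_def by (metis ereal_less_eq(3) le_less_trans mem_Collect_eq)

lemma ivl0_mono: "a \<le> b \<Longrightarrow> ivl0 a \<subseteq> ivl0 b"
  unfolding ivl0_def by (auto intro: less_le_trans)

lemma eventually_in_ivl0:
  assumes "x \<in> ivl0 smax"
  shows "eventually (\<lambda>s. s \<in> ivl0 smax) (at_right 0)"
  unfolding eventually_at_right_field
  using assms ivl0_downward_closed by (intro exI[of _ x]) (auto simp: ivl0_def)

lemma ivl0_eq_translated_interval:
  fixes I :: "real set"
  assumes I: "is_interval I" "open I" "I \<noteq> {}"
    and above: "\<And>u. u \<in> I \<Longrightarrow> s0 < u" and inf: "\<And>x. s0 < x \<Longrightarrow> \<exists>u\<in>I. u < x"
  defines "smax \<equiv> (SUP u\<in>I. ereal u) - ereal s0"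
  shows "ivl0 smax = (\<lambda>s. s - s0) ` I" and "0 < smax"
proof -
  have mem: "s \<in> ivl0 smax \<longleftrightarrow> s + s0 \<in> I" for s
  proof
    assume "s \<in> ivl0 smax"
    then have "0 < s" "ereal (s + s0) < (SUP u\<in>I. ereal u)"
      unfolding ivl0_def smax_def by (auto simp: ereal_less_minus_iff add.commute)
    then obtain u1 u2 where "u1 \<in> I" "u1 < s + s0" "u2 \<in> I" "s + s0 < u2"
      using inf[of "s + s0"] by (auto simp: less_SUP_iff)
    then show "s + s0 \<in> I" using I(1) unfolding is_interval_1 by (meson less_imp_le)
  next
    assume "s + s0 \<in> I"
    then obtain e where "e > 0" "ball (s + s0) e \<subseteq> I" using I(2) open_contains_ball by blast
    then have "s + s0 + e / 2 \<in> I" by (auto simp: dist_real_def)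
    then have "ereal (s + s0) < (SUP u\<in>I. ereal u)"
      using \<open>e > 0\<close> by (intro less_SUP_iff[THEN iffD2]) (auto intro!: bexI[of _ "s + s0 + e / 2"])
    moreover have "0 < s" using above[OF \<open>s + s0 \<in> I\<close>] by simp
    ultimately show "s \<in> ivl0 smax"
      unfolding ivl0_def smax_def by (auto simp: ereal_less_minus_iff add.commute)
  qed
  then show "ivl0 smax = (\<lambda>s. s - s0) ` I"
    by (auto intro: rev_image_eqI[of "_ + s0"])
  obtain u where "u \<in> I" using I(3) by blast
  then have "u - s0 \<in> ivl0 smax" using mem[of "u - s0"] by simp
  then show "0 < smax" unfolding ivl0_def by (auto intro: less_trans[of 0 "ereal (u - s0)"])
qed

section \<open>Limits of real functions\<close>

lemma isCont_value_eq_limit: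
  fixes G :: "real \<Rightarrow> real"
  assumes "isCont G 0" "(u \<longlongrightarrow> 0) F" "F \<noteq> bot"
    and "eventually (\<lambda>s. G (u s) = v s) F" "(v \<longlongrightarrow> L) F"
  shows "G 0 = L"
proof -
  have "((\<lambda>s. G (u s)) \<longlongrightarrow> G 0) F" using assms(1,2) by (rule isCont_tendsto_compose)
  moreover have "((\<lambda>s. G (u s)) \<longlongrightarrow> L) F" using assms(4,5) by (rule tendsto_cong[THEN iffD2])
  ultimately show ?thesis by (rule tendsto_unique[OF assms(3)])
qed

lemma deriv_tendsto_zero_at_bot:
  fixes f f' :: "real \<Rightarrow> real"
  assumes lim: "(f \<longlongrightarrow> a) at_bot"
    and der: "eventually (\<lambda>t. (f has_real_derivative f' t) (at t)) at_bot"
    and lim': "(f' \<longlongrightarrow> L) at_bot"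
  shows "L = 0"
proof (rule ccontr)
  assume "L \<noteq> 0"
  \<comment> \<open>far out, the increment of \<open>f\<close> over a unit interval is both small and about \<open>L\<close>\<close>
  have "eventually (\<lambda>t. dist (f' t) L < \<bar>L\<bar> / 2 \<and> dist (f t) a < \<bar>L\<bar> / 4 \<and>
      (f has_real_derivative f' t) (at t)) at_bot"
    using \<open>L \<noteq> 0\<close> by (intro eventually_conj der tendstoD[OF lim'] tendstoD[OF lim]) auto
  then obtain N where N: "\<And>t. t \<le> N \<Longrightarrow> dist (f' t) L < \<bar>L\<bar> / 2 \<and>
      dist (f t) a < \<bar>L\<bar> / 4 \<and> (f has_real_derivative f' t) (at t)"
    unfolding eventually_at_bot_linorder by blast
  obtain z where z: "N - 1 < z" "z < N" "f N - f (N - 1) = (N - (N - 1)) * f' z"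
    using MVT2[of "N - 1" N f f'] N by auto
  have "dist (f' z) L < \<bar>L\<bar> / 2" using N[of z] z by simp
  then have "\<bar>f' z\<bar> > \<bar>L\<bar> / 2" unfolding dist_real_def by arith
  moreover have "dist (f N) a < \<bar>L\<bar> / 4" "dist (f (N - 1)) a < \<bar>L\<bar> / 4"
    using N[of N] N[of "N - 1"] by simp_all
  then have "\<bar>f N - f (N - 1)\<bar> < \<bar>L\<bar> / 2" unfolding dist_real_def by arith
  ultimately show False using z(3) by simp
qed

lemma filterlim_at_bot_at_right_0_of_deriv_ge:
  fixes f f' :: "real \<Rightarrow> real"
  assumes "d > 0" "c > 0"
    and der: "\<And>s. 0 < s \<Longrightarrow> s \<le> d \<Longrightarrow> (f has_real_derivative f' s) (at s)"
    and ge: "\<And>s. 0 < s \<Longrightarrow> s \<le> d \<Longrightarrow> c / s \<le> f' s"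
  shows "filterlim f at_bot (at_right 0)"
proof -
  \<comment> \<open>\<open>f - c ln\<close> is nondecreasing on \<open>(0, d]\<close>, so \<open>f\<close> is dominated by \<open>c ln\<close> up to a constant\<close>
  define C where "C = f d - c * ln d"
  have bound: "f s \<le> C + c * ln s" if s: "0 < s" "s \<le> d" for s
  proof -
    have "f s - c * ln s \<le> f d - c * ln d"
    proof (rule DERIV_nonneg_imp_nondecreasing[OF s(2)])
      fix u assume u: "s \<le> u" "u \<le> d"
      then have "((\<lambda>u. f u - c * ln u) has_real_derivative f' u - c * (1 / u)) (at u)"
        using s der[of u] by (auto intro!: derivative_eq_intros)
      moreover have "c * (1 / u) \<le> f' u" using ge[of u] u s by simp
      ultimately show "\<exists>y. ((\<lambda>u. f u - c * ln u) has_real_derivative y) (at u) \<and> 0 \<le> y"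
        by (intro exI conjI) auto
    qed
    then show ?thesis unfolding C_def by simp
  qed
  show ?thesis
    unfolding filterlim_at_bot
  proof
    fix Z :: real
    have "eventually (\<lambda>s. ln s \<le> (Z - C) / c) (at_right 0)"
      using ln_at_0 unfolding filterlim_at_bot by blast
    moreover have "eventually (\<lambda>s. 0 < s \<and> s \<le> d) (at_right 0)"
      unfolding eventually_at_right_field using \<open>d > 0\<close> by (intro exI[of _ d]) auto
    ultimately show "eventually (\<lambda>s. f s \<le> Z) (at_right 0)"
    proof eventually_elim
      case (elim s)
      then have "c * ln s \<le> Z - C" using \<open>c > 0\<close> by (simp add: field_simps)
      then show ?case using bound[of s] elim by simp
    qed
  qed
qed

lemma le_ident_of_deriv_lt_1:
  fixes r r' :: "real \<Rightarrow> real"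
  assumes lim: "(r \<longlongrightarrow> 0) (at_right 0)" and "0 < s"
    and der: "\<And>u. 0 < u \<Longrightarrow> u \<le> s \<Longrightarrow> (r has_real_derivative r' u) (at u)"
    and lt: "\<And>u. 0 < u \<Longrightarrow> u \<le> s \<Longrightarrow> r' u < 1"
  shows "r s \<le> s"
proof -
  \<comment> \<open>\<open>r - id\<close> decreases on \<open>(0, s]\<close> and tends to 0 at \<open>0\<close>\<close>
  have "r s - s \<le> r e - e" if e: "0 < e" "e \<le> s" for e
  proof (rule DERIV_nonpos_imp_nonincreasing[OF e(2)])
    fix u assume "e \<le> u" "u \<le> s"
    then have "((\<lambda>u. r u - u) has_real_derivative r' u - 1) (at u)" "r' u - 1 \<le> 0"
      using e der[of u] lt[of u] by (auto intro!: derivative_eq_intros)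
    then show "\<exists>y. ((\<lambda>u. r u - u) has_real_derivative y) (at u) \<and> y \<le> 0" by blast
  qed
  moreover have "((\<lambda>e. r e - e) \<longlongrightarrow> 0 - 0) (at_right 0)"
    by (intro tendsto_intros lim tendsto_ident_at)
  ultimately have "r s - s \<le> 0"
    using \<open>0 < s\<close> by (intro tendsto_lowerbound[of "\<lambda>e. r e - e" 0 "at_right 0"])
      (auto simp: eventually_at_right_field intro!: exI[of _ s])
  then show ?thesis by simp
qed

lemma downward_closed_if_interval_unbounded_below:
  fixes J :: "real set"
  assumes "is_interval J" "\<And>x. \<exists>t\<in>J. t < x" "t \<in> J" "u \<le> t"
  shows "u \<in> J"
proof -
  obtain v where "v \<in> J" "v < u" using assms(2) by blast
  then show ?thesis using assms(1,3,4) unfolding is_interval_1 by (meson less_imp_le)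
qed

lemma strict_mono_on_tendsto_Inf_at_bot:
  fixes f :: "real \<Rightarrow> real"
  assumes mono: "strict_mono_on J f" and down: "\<And>t u. t \<in> J \<Longrightarrow> u \<le> t \<Longrightarrow> u \<in> J"
    and "t0 \<in> J" and bdd: "bdd_below (f ` J)"
  shows "(f \<longlongrightarrow> Inf (f ` J)) at_bot" and "\<And>t. t \<in> J \<Longrightarrow> Inf (f ` J) < f t"
proof -
  show "(f \<longlongrightarrow> Inf (f ` J)) at_bot"
  proof (rule order_tendstoI)
    fix a assume "a < Inf (f ` J)"
    then show "eventually (\<lambda>t. a < f t) at_bot"
      unfolding eventually_at_bot_linorder using down[OF \<open>t0 \<in> J\<close>] bdd
      by (intro exI[of _ t0]) (auto intro: less_le_trans cInf_lower)
  next
    fix a assume "Inf (f ` J) < a"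
    then obtain t1 where t1: "t1 \<in> J" "f t1 < a"
      using \<open>t0 \<in> J\<close> cInf_lessD[of "f ` J" a] by auto
    show "eventually (\<lambda>t. f t < a) at_bot"
      unfolding eventually_at_bot_linorder
    proof (intro exI[of _ t1] allI impI)
      fix t assume "t \<le> t1"
      then have "f t \<le> f t1" using strict_mono_on_leD[OF mono down[OF t1(1)] t1(1)] by blast
      then show "f t < a" using t1 by simp
    qed
  qed
  fix t assume "t \<in> J"
  then have "Inf (f ` J) \<le> f (t - 1)" using down bdd by (auto intro: cInf_lower)
  also have "\<dots> < f t" using strict_mono_onD[OF mono] down[OF \<open>t \<in> J\<close>, of "t - 1"] \<open>t \<in> J\<close> by simp
  finally show "Inf (f ` J) < f t" .
qed

lemma filterlim_the_inv_into_at_right_0: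
  fixes f :: "real \<Rightarrow> real"
  assumes mono: "strict_mono_on S f" and pos: "\<And>s. s \<in> S \<Longrightarrow> 0 < s"
    and small: "\<And>a. 0 < a \<Longrightarrow> \<exists>s\<in>S. s < a"
    and ev: "eventually (\<lambda>t. t \<in> f ` S) at_bot"
  shows "filterlim (the_inv_into S f) (at_right 0) at_bot"
proof -
  have inj: "inj_on f S" using mono by (rule strict_mono_on_imp_inj_on)
  have inv: "the_inv_into S f t \<in> S \<and> f (the_inv_into S f t) = t" if "t \<in> f ` S" for t
    using that the_inv_into_into[OF inj] f_the_inv_into_f[OF inj] by auto
  have inv_pos: "eventually (\<lambda>t. 0 < the_inv_into S f t) at_bot"
    using ev by (rule eventually_mono) (use inv pos in blast)
  have "(the_inv_into S f \<longlongrightarrow> 0) at_bot"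
  proof (rule order_tendstoI)
    fix a :: real assume "a < 0"
    show "eventually (\<lambda>t. a < the_inv_into S f t) at_bot"
      using inv_pos by (rule eventually_mono) (use \<open>a < 0\<close> in simp)
  next
    fix a :: real assume "0 < a"
    then obtain s where s: "s \<in> S" "s < a" using small by blast
    have "eventually (\<lambda>t. t < f s) at_bot"
      unfolding eventually_at_bot_linorder by (intro exI[of _ "f s - 1"]) auto
    with ev show "eventually (\<lambda>t. the_inv_into S f t < a) at_bot"
    proof eventually_elim
      case (elim t)
      then have "the_inv_into S f t \<in> S" "f (the_inv_into S f t) < f s" using inv by auto
      then have "the_inv_into S f t < s" using strict_mono_on_less[OF mono _ s(1)] by blast
      then show ?case using s by simp
    qed
  qed
  then show ?thesis
    unfolding filterlim_at using inv_pos by (auto elim: eventually_mono)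
qed

lemma filterlim_the_inv_into_at_bot:
  fixes f :: "real \<Rightarrow> real"
  assumes mono: "strict_mono_on J f" and unbdd: "\<And>x. \<exists>t\<in>J. t < x"
    and above: "\<And>t. t \<in> J \<Longrightarrow> s0 < f t"
    and ev: "eventually (\<lambda>u. u \<in> f ` J) (at_right s0)"
  shows "filterlim (the_inv_into J f) at_bot (at_right s0)"
  unfolding filterlim_at_bot
proof
  fix Z :: real
  obtain t1 where t1: "t1 \<in> J" "t1 < Z" using unbdd by blast
  have inj: "inj_on f J" using mono by (rule strict_mono_on_imp_inj_on)
  have "eventually (\<lambda>u. u < f t1) (at_right s0)"
    using above[OF t1(1)] by (simp add: eventually_at_right_field) (blast intro: exI[of _ "f t1"])
  with ev show "eventually (\<lambda>u. the_inv_into J f u \<le> Z) (at_right s0)"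
  proof eventually_elim
    case (elim u)
    then have "the_inv_into J f u \<in> J" "f (the_inv_into J f u) < f t1"
      using the_inv_into_into[OF inj, of u J] f_the_inv_into_f[OF inj, of u] by auto
    then have "the_inv_into J f u < t1" using strict_mono_on_less[OF mono _ t1(1)] by blast
    then show ?case using t1 by simp
  qed
qed

section \<open>The change of variables Phi\<close>

lemma M1_iff: "(\<rho>, r) \<in> M1 \<longleftrightarrow> 0 < \<rho> \<and> \<rho> < 1 \<and> 0 < r"
  by (auto simp: M1_def)

lemma Phi_M1:
  assumes "(\<rho>, r) \<in> M1"
  shows "Phi (\<rho>, r) \<in> N0" and "fst (Phi (\<rho>, r)) = sqrt (1 - \<rho>\<^sup>2) / r" and "snd (Phi (\<rho>, r)) = r\<^sup>2"
    and "1 - (fst (Phi (\<rho>, r)))\<^sup>2 * snd (Phi (\<rho>, r)) = \<rho>\<^sup>2"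
proof -
  have \<rho>: "0 < \<rho>" "\<rho> < 1" "0 < r" using assms by (auto simp: M1_def)
  then have "\<rho>\<^sup>2 < 1" by (simp add: power_less_one_iff)
  show "fst (Phi (\<rho>, r)) = sqrt (1 - \<rho>\<^sup>2) / r" "snd (Phi (\<rho>, r)) = r\<^sup>2"
    by (simp_all add: Phi_def)
  moreover show "1 - (fst (Phi (\<rho>, r)))\<^sup>2 * snd (Phi (\<rho>, r)) = \<rho>\<^sup>2"
    using \<rho> \<open>\<rho>\<^sup>2 < 1\<close> by (simp add: Phi_def power_divide)
  ultimately show "Phi (\<rho>, r) \<in> N0"
    using \<rho> \<open>\<rho>\<^sup>2 < 1\<close> by (auto simp: N0_def N1_def Phi_def power_divide)
qed

lemma Phi_M1_inverse:
  assumes "(\<rho>, r) \<in> M1" "Phi (\<rho>, r) = (\<eta>, w)"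
  shows "\<rho> = sqrt (1 - \<eta>\<^sup>2 * w)" "r = sqrt w"
  using Phi_M1[OF assms(1)] assms by (auto simp: M1_def)

lemma has_real_derivative_Phi_fst_along_toy_solution:
  fixes \<rho> r :: "real \<Rightarrow> real"
  assumes \<rho>': "(\<rho> has_real_derivative toy_rhs \<beta> g (\<rho> s) (r s)) (at s)"
    and r': "(r has_real_derivative \<rho> s) (at s)" and M1: "(\<rho> s, r s) \<in> M1"
  shows "((\<lambda>s. fst (Phi (\<rho> s, r s))) has_real_derivative
           eta_rhs \<beta> g (fst (Phi (\<rho> s, r s))) (snd (Phi (\<rho> s, r s))) * (\<rho> s / r s)) (at s)"
proof -
  define q where "q = sqrt (1 - (\<rho> s)\<^sup>2)"
  have b: "0 < \<rho> s" "\<rho> s < 1" "0 < r s" using M1 by (auto simp: M1_def)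
  then have "(\<rho> s)\<^sup>2 < 1" by (simp add: power_less_one_iff)
  then have q: "0 < q" "q\<^sup>2 = 1 - (\<rho> s)\<^sup>2" unfolding q_def by simp_all
  have "((\<lambda>s. sqrt (1 - (\<rho> s)\<^sup>2) / r s) has_real_derivative
      ((- (2 * \<rho> s * toy_rhs \<beta> g (\<rho> s) (r s)) / (2 * q)) * r s - q * \<rho> s) / (r s)\<^sup>2) (at s)"
    using \<rho>' r' b q unfolding q_def by (auto intro!: derivative_eq_intros simp: power2_eq_square field_simps)
  moreover have "sqrt (1 - (q / r s)\<^sup>2 * (r s)\<^sup>2) = \<rho> s"
    using q b by (simp add: power_divide)
  then have "((- (2 * \<rho> s * toy_rhs \<beta> g (\<rho> s) (r s)) / (2 * q)) * r s - q * \<rho> s) / (r s)\<^sup>2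
      = eta_rhs \<beta> g (q / r s) ((r s)\<^sup>2) * (\<rho> s / r s)"
    unfolding eta_rhs_def toy_rhs_def q(2)[symmetric] q_def[symmetric]
    using b q by (simp add: field_simps power2_eq_square)
  ultimately show ?thesis
    unfolding q_def by (simp add: Phi_def)
qed

lemma has_real_derivative_Phi_snd_along_toy_solution:
  fixes \<rho> r :: "real \<Rightarrow> real"
  assumes r': "(r has_real_derivative \<rho> s) (at s)" and "r s \<noteq> 0"
  shows "((\<lambda>s. snd (Phi (\<rho> s, r s))) has_real_derivative 2 * snd (Phi (\<rho> s, r s)) * (\<rho> s / r s)) (at s)"
  using r' \<open>r s \<noteq> 0\<close> by (auto intro!: derivative_eq_intros simp: Phi_def power2_eq_square)

lemma has_real_derivative_sqrt_along_t_solution: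
  fixes w :: "real \<Rightarrow> real"
  assumes w': "(w has_real_derivative 2 * w t) (at t)" and "0 < w t"
  shows "((\<lambda>t. sqrt (w t)) has_real_derivative sqrt (w t)) (at t)"
  using w' \<open>0 < w t\<close> by (auto intro!: derivative_eq_intros simp: real_div_sqrt simp flip: divide_inverse_commute)

lemma has_real_derivative_inverse_Phi_along_t_solution:
  fixes \<eta> w :: "real \<Rightarrow> real"
  assumes \<eta>': "(\<eta> has_real_derivative eta_rhs \<beta> g (\<eta> t) (w t)) (at t)"
    and w': "(w has_real_derivative 2 * w t) (at t)" and N0: "(\<eta> t, w t) \<in> N0"
  shows "((\<lambda>t. sqrt (1 - (\<eta> t)\<^sup>2 * w t)) has_real_derivative
      toy_rhs \<beta> g (sqrt (1 - (\<eta> t)\<^sup>2 * w t)) (sqrt (w t)) * (sqrt (w t) / sqrt (1 - (\<eta> t)\<^sup>2 * w t))) (at t)"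
proof -
  define \<rho> where "\<rho> = sqrt (1 - (\<eta> t)\<^sup>2 * w t)"
  define r where "r = sqrt (w t)"
  define q where "q = sqrt (1 - \<rho>\<^sup>2)"
  have b: "0 < \<eta> t" "0 < w t" "(\<eta> t)\<^sup>2 * w t < 1" using N0 by (auto simp: N0_def N1_def)
  then have \<rho>: "0 < \<rho>" "\<rho>\<^sup>2 = 1 - (\<eta> t)\<^sup>2 * w t" and r: "0 < r" "w t = r\<^sup>2"
    unfolding \<rho>_def r_def by simp_all
  have "1 - \<rho>\<^sup>2 \<ge> 0" using \<rho>(2) b(2) by simp
  have "q = \<eta> t * r"
    unfolding q_def \<rho>(2) r_def using b by (simp add: real_sqrt_mult)
  then have q_div: "\<eta> t = q / r"
    using r(1) by simp
  have q_sq: "q\<^sup>2 = 1 - \<rho>\<^sup>2"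
    unfolding q_def using \<open>1 - \<rho>\<^sup>2 \<ge> 0\<close> by simp
  have "((\<lambda>t. sqrt (1 - (\<eta> t)\<^sup>2 * w t)) has_real_derivative
      - (2 * \<eta> t * eta_rhs \<beta> g (\<eta> t) (w t) * w t + (\<eta> t)\<^sup>2 * (2 * w t)) / (2 * \<rho>)) (at t)"
    using \<eta>' w' b \<rho> unfolding \<rho>_def by (auto intro!: derivative_eq_intros simp: field_simps)
  moreover have "- (2 * \<eta> t * eta_rhs \<beta> g (\<eta> t) (w t) * w t + (\<eta> t)\<^sup>2 * (2 * w t)) / (2 * \<rho>)
      = toy_rhs \<beta> g \<rho> r * (r / \<rho>)"
    unfolding eta_rhs_def \<rho>_def[symmetric] toy_rhs_def q_def[symmetric]
    unfolding q_sq[symmetric] q_div r(2)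
    using \<rho> r by (simp add: field_simps power2_eq_square)
  ultimately show ?thesis unfolding \<rho>_def r_def by simp
qed

section \<open>Reparametrisation of tip solutions\<close>

locale tip_to_t_tip =
  fixes \<beta> :: real and g \<rho> r :: "real \<Rightarrow> real" and smax sstar :: ereal and s1 :: real
    and \<tau> :: "real \<Rightarrow> real"
  assumes g_cont: "isCont g 0"
    and tip: "toy_tip_solution \<beta> g \<rho> r smax"
    and sstar_le: "sstar \<le> smax"
    and rho_pos: "\<forall>s\<in>ivl0 sstar. \<rho> s > 0"
    and s1_in: "s1 \<in> ivl0 sstar"
    and tau_deriv: "\<forall>s\<in>ivl0 sstar. (\<tau> has_real_derivative \<rho> s / r s) (at s)"
begin

abbreviation "S \<equiv> ivl0 sstar"
abbreviation "J \<equiv> \<tau> ` S"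
abbreviation "ti \<equiv> the_inv_into S \<tau>"
abbreviation "\<eta> \<equiv> \<lambda>t. fst (Phi (\<rho> (ti t), r (ti t)))"
abbreviation "w \<equiv> \<lambda>t. snd (Phi (\<rho> (ti t), r (ti t)))"

lemma toy_solution_on_S: "toy_solution \<beta> g \<rho> r S"
  using tip ivl0_mono[OF sstar_le] unfolding toy_tip_solution_def toy_solution_def by blast

lemma in_M1: "s \<in> S \<Longrightarrow> (\<rho> s, r s) \<in> M1"
  using toy_solution_on_S rho_pos unfolding toy_solution_def M0_def M1_def by auto

lemma rho_deriv: "s \<in> S \<Longrightarrow> (\<rho> has_real_derivative toy_rhs \<beta> g (\<rho> s) (r s)) (at s)"
  and r_deriv: "s \<in> S \<Longrightarrow> (r has_real_derivative \<rho> s) (at s)"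
  using toy_solution_on_S unfolding toy_solution_def by blast+

lemma S_downward_closed: "0 < s \<Longrightarrow> s \<le> s1 \<Longrightarrow> s \<in> S"
  using s1_in by (rule ivl0_downward_closed)

lemma S_pos: "s \<in> S \<Longrightarrow> 0 < s"
  by (simp add: ivl0_def)

lemma tau_diffeo: "diffeo_onto_range \<tau> S"
proof (rule diffeo_onto_range_of_deriv_pos[OF is_interval_ivl0 open_ivl0])
  show "(\<tau> has_real_derivative \<rho> s / r s) (at s)" "0 < \<rho> s / r s" if "s \<in> S" for s
    using tau_deriv in_M1[OF that] that by (auto simp: M1_iff)
  have "isCont (\<lambda>s. \<rho> s / r s) s" if "s \<in> S" for s
    using DERIV_isCont[OF rho_deriv[OF that]] DERIV_isCont[OF r_deriv[OF that]] in_M1[OF that]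
    by (auto simp: M1_iff intro!: continuous_intros)
  then show "continuous_on S (\<lambda>s. \<rho> s / r s)"
    by (intro continuous_at_imp_continuous_on) auto
qed

lemma tau_strict_mono: "strict_mono_on S \<tau>"
  using tau_deriv in_M1 by (intro strict_mono_on_of_deriv_pos[OF is_interval_ivl0]) (auto simp: M1_iff)

lemma tau_continuous: "continuous_on S \<tau>"
  using tau_deriv by (intro continuous_at_imp_continuous_on) (auto intro: DERIV_isCont)

lemma tau_tendsto_at_bot: "filterlim \<tau> at_bot (at_right 0)"
proof -
  \<comment> \<open>near the tip \<open>\<rho> > 1/2\<close> and \<open>r s \<le> s\<close>, so \<open>\<tau>' \<ge> 1 / (2 s)\<close>\<close>
  have "((\<rho> \<longlongrightarrow> 1) (at_right 0))" using tip unfolding toy_tip_solution_def by blast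
  then have "eventually (\<lambda>s. \<rho> s > 1/2) (at_right 0)" by (rule order_tendstoD) simp
  then obtain \<delta> where \<delta>: "\<delta> > 0" "\<And>s. 0 < s \<Longrightarrow> s < \<delta> \<Longrightarrow> \<rho> s > 1/2"
    unfolding eventually_at_right_field by blast
  define d where "d = min (\<delta> / 2) s1"
  have d: "0 < d" "d \<le> s1" "d < \<delta>" using \<delta> S_pos[OF s1_in] by (auto simp: d_def)
  have r_le: "r s \<le> s" if "0 < s" "s \<le> d" for s
  proof (rule le_ident_of_deriv_lt_1[where r' = \<rho>])
    show "(r \<longlongrightarrow> 0) (at_right 0)" using tip unfolding toy_tip_solution_def by blast
  qed (use that d S_downward_closed r_deriv in_M1 in \<open>auto simp: M1_iff\<close>)
  show ?thesis
  proof (rule filterlim_at_bot_at_right_0_of_deriv_ge[of d "1/2"])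
    fix s assume s: "0 < s" "s \<le> d"
    then have sS: "s \<in> S" using d S_downward_closed by auto
    show "(\<tau> has_real_derivative \<rho> s / r s) (at s)" using tau_deriv sS by blast
    have "0 < r s" "1/2 < \<rho> s" using in_M1[OF sS] \<delta>(2)[of s] s d by (auto simp: M1_iff)
    then have "1 / 2 / s \<le> 1 / 2 / r s" using r_le[OF s] by (simp add: frac_le)
    also have "\<dots> \<le> \<rho> s / r s" using \<open>0 < r s\<close> \<open>1/2 < \<rho> s\<close> by (intro divide_right_mono) auto
    finally show "1 / 2 / s \<le> \<rho> s / r s" .
  qed (use d in auto)
qed

lemma J_interval: "is_interval J"
  using is_interval_ivl0 tau_continuous by (rule is_interval_continuous_image)

lemma J_open: "open J"
  using tau_diffeo unfolding diffeo_onto_range_def by blast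

lemma J_unbounded_below: "\<exists>t\<in>J. t < x"
proof -
  have "eventually (\<lambda>s. \<tau> s \<le> x - 1) (at_right 0)"
    using tau_tendsto_at_bot unfolding filterlim_at_bot by blast
  then have "eventually (\<lambda>s. s \<in> S \<and> \<tau> s \<le> x - 1) (at_right 0)"
    using eventually_in_ivl0[OF s1_in] by eventually_elim blast
  then obtain s where "s \<in> S" "\<tau> s \<le> x - 1"
    using eventually_happens'[of "at_right (0::real)"] by auto
  then show ?thesis by force
qed

lemma eventually_in_J: "eventually (\<lambda>t. t \<in> J) at_bot"
  unfolding eventually_at_bot_linorder using s1_in
  by (intro exI[of _ "\<tau> s1"])
    (auto intro: downward_closed_if_interval_unbounded_below[OF J_interval J_unbounded_below])

lemma ti_in_S: "t \<in> J \<Longrightarrow> ti t \<in> S"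
  and tau_ti: "t \<in> J \<Longrightarrow> \<tau> (ti t) = t"
  using the_inv_into_into[OF strict_mono_on_imp_inj_on[OF tau_strict_mono]]
    f_the_inv_into_f[OF strict_mono_on_imp_inj_on[OF tau_strict_mono]] by auto

lemma ti_deriv: "t \<in> J \<Longrightarrow> (ti has_real_derivative inverse (\<rho> (ti t) / r (ti t))) (at t)"
  using has_real_derivative_the_inv_into[OF open_ivl0 strict_mono_on_imp_inj_on[OF tau_strict_mono]
      tau_continuous ti_in_S, of t "\<rho> (ti t) / r (ti t)"]
    tau_deriv ti_in_S[of t] in_M1[OF ti_in_S, of t] tau_ti[of t] by (auto simp: M1_iff)

lemma ti_tendsto: "filterlim ti (at_right 0) at_bot"
proof (rule filterlim_the_inv_into_at_right_0[OF tau_strict_mono S_pos _ eventually_in_J])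
  fix a :: real assume "0 < a"
  then show "\<exists>s\<in>S. s < a"
    using S_pos[OF s1_in] by (intro bexI[of _ "min (a/2) s1"] S_downward_closed) auto
qed

lemma t_solution: "t_solution \<beta> g \<eta> w J"
  unfolding t_solution_def
proof (intro ballI conjI)
  fix t assume t: "t \<in> J"
  note s = ti_in_S[OF t]
  have nz: "\<rho> (ti t) / r (ti t) \<noteq> 0" "r (ti t) \<noteq> 0" using in_M1[OF s] by (auto simp: M1_iff)
  show "(\<eta> has_real_derivative eta_rhs \<beta> g (\<eta> t) (w t)) (at t)"
    using DERIV_chain2[OF has_real_derivative_Phi_fst_along_toy_solution[OF rho_deriv[OF s]
        r_deriv[OF s] in_M1[OF s]] ti_deriv[OF t]] nz by simp
  show "(w has_real_derivative 2 * w t) (at t)"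
    using DERIV_chain2[OF has_real_derivative_Phi_snd_along_toy_solution[of r \<rho>, OF r_deriv[OF s] nz(2)]
        ti_deriv[OF t]] nz by simp
  show "(\<eta> t, w t) \<in> N1"
    using Phi_M1(1)[OF in_M1[OF s]] by (cases "Phi (\<rho> (ti t), r (ti t))") (simp add: N0_def)
qed

lemma w_tendsto: "(w \<longlongrightarrow> 0) at_bot"
proof -
  have "((\<lambda>s. (r s)\<^sup>2) \<longlongrightarrow> 0\<^sup>2) (at_right 0)"
    using tip unfolding toy_tip_solution_def by (intro tendsto_intros) blast
  from filterlim_compose[OF this ti_tendsto] show ?thesis by (simp add: Phi_def)
qed

lemma eta_tendsto: "(\<eta> \<longlongrightarrow> 1/3) at_bot"
proof -
  obtain \<eta>0 where "\<eta>0 > 0" and lim: "((\<lambda>s. sqrt (1 - (\<rho> s)\<^sup>2) / r s) \<longlongrightarrow> \<eta>0) (at_right 0)"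
    using tip unfolding toy_tip_solution_def by blast
  from filterlim_compose[OF lim ti_tendsto] have \<eta>: "(\<eta> \<longlongrightarrow> \<eta>0) at_bot"
    by (simp add: Phi_def)
  \<comment> \<open>\<open>\<eta>'\<close> converges to \<open>eta_rhs \<beta> g \<eta>0 0\<close>, which must vanish because \<open>\<eta>\<close> converges\<close>
  have "((\<lambda>t. eta_rhs \<beta> g (\<eta> t) (w t)) \<longlongrightarrow> eta_rhs \<beta> g \<eta>0 0) at_bot"
    unfolding eta_rhs_def
    by (intro tendsto_intros \<eta> w_tendsto isCont_tendsto_compose[OF g_cont w_tendsto]) simp
  moreover have "eventually (\<lambda>t. (\<eta> has_real_derivative eta_rhs \<beta> g (\<eta> t) (w t)) (at t)) at_bot"
    using eventually_in_J by (rule eventually_mono) (use t_solution in \<open>auto simp: t_solution_def\<close>)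
  ultimately have "eta_rhs \<beta> g \<eta>0 0 = 0"
    using \<eta> by (intro deriv_tendsto_zero_at_bot)
  then have "\<eta>0 = 1/3" using \<open>\<eta>0 > 0\<close> by (simp add: eta_rhs_def)
  then show ?thesis using \<eta> by (simp only:)
qed

lemma tip_profile_squared_analytic:
  obtains a H where "0 < a" "real_analytic_on H {-a<..<a}"
    "eventually (\<lambda>s. (r s)\<^sup>2 < a \<and> H ((r s)\<^sup>2) = (sqrt (1 - (\<rho> s)\<^sup>2) / r s)\<^sup>2) (at_right 0)"
proof -
  obtain s0 G where s0: "s0 \<in> ivl0 smax" and G: "real_analytic_on G {-((r s0)\<^sup>2)<..<(r s0)\<^sup>2}"
    and G_eq: "\<And>s. s \<in> {0<..<s0} \<Longrightarrow> \<rho> s = G ((r s)\<^sup>2)"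
    using tip unfolding toy_tip_solution_def by blast
  have lim_\<rho>: "(\<rho> \<longlongrightarrow> 1) (at_right 0)" and lim_r: "(r \<longlongrightarrow> 0) (at_right 0)"
    using tip unfolding toy_tip_solution_def by blast+
  define a where "a = (r s0)\<^sup>2"
  have "0 < a"
    using tip s0 unfolding a_def toy_tip_solution_def toy_solution_def M0_def by auto
  have r2: "((\<lambda>s. (r s)\<^sup>2) \<longlongrightarrow> 0) (at_right 0)"
    using tendsto_power[OF lim_r, of 2] by simp
  have "0 < s0" using s0 by (simp add: ivl0_def)
  then have "eventually (\<lambda>s. s < s0) (at_right 0)"
    unfolding eventually_at_right_field by (intro exI[of _ s0]) auto
  then have ev: "eventually (\<lambda>s. s \<in> S \<and> s < s0 \<and> (r s)\<^sup>2 < a) (at_right 0)"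
    using eventually_in_ivl0[OF s1_in] order_tendstoD(2)[OF r2 \<open>0 < a\<close>]
    by (intro eventually_conj)
  have "G 0 = 1"
  proof (rule isCont_value_eq_limit[OF _ r2 _ _ lim_\<rho>])
    show "isCont G 0" using G \<open>0 < a\<close> unfolding a_def by (intro real_analytic_on_imp_isCont) auto
    show "eventually (\<lambda>s. G ((r s)\<^sup>2) = \<rho> s) (at_right 0)"
      using ev by eventually_elim (use G_eq S_pos in auto)
  qed simp
  have "real_analytic_on (\<lambda>v. 1 - G v * G v) {-a<..<a}"
    using G unfolding a_def by (intro real_analytic_on_diff real_analytic_on_mult real_analytic_on_const)
  moreover have "0 \<in> {-a<..<a}" "1 - G 0 * G 0 = 0" using \<open>0 < a\<close> \<open>G 0 = 1\<close> by auto
  ultimately obtain H where H: "real_analytic_on H {-a<..<a}"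
    and H_eq: "\<And>v. v \<noteq> 0 \<Longrightarrow> H v = (1 - G v * G v) / v"
    by (rule real_analytic_on_divide_by_ident) blast
  have "eventually (\<lambda>s. (r s)\<^sup>2 < a \<and> H ((r s)\<^sup>2) = (sqrt (1 - (\<rho> s)\<^sup>2) / r s)\<^sup>2) (at_right 0)"
    using ev
  proof eventually_elim
    case (elim s)
    then have "0 < \<rho> s" "\<rho> s < 1" "0 < r s" using in_M1 by (auto simp: M1_iff)
    then have "(\<rho> s)\<^sup>2 < 1" "r s \<noteq> 0" by (simp_all add: power_less_one_iff)
    moreover have "G ((r s)\<^sup>2) = \<rho> s" using G_eq[of s] S_pos elim by simp
    ultimately show ?case
      using H_eq[of "(r s)\<^sup>2"] elim by (simp add: power_divide power2_eq_square)
  qed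
  with \<open>0 < a\<close> H show ?thesis by (rule that)
qed

lemma tip_profile_analytic:
  obtains b K where "0 < b" "real_analytic_on K {-b<..<b}"
    "eventually (\<lambda>s. (r s)\<^sup>2 < b \<and> sqrt (1 - (\<rho> s)\<^sup>2) / r s = K ((r s)\<^sup>2)) (at_right 0)"
proof -
  obtain a H where "0 < a" and H: "real_analytic_on H {-a<..<a}"
    and H_r: "eventually (\<lambda>s. (r s)\<^sup>2 < a \<and> H ((r s)\<^sup>2) = (sqrt (1 - (\<rho> s)\<^sup>2) / r s)\<^sup>2) (at_right 0)"
    by (rule tip_profile_squared_analytic)
  obtain \<eta>0 where "\<eta>0 > 0" and \<eta>0: "((\<lambda>s. sqrt (1 - (\<rho> s)\<^sup>2) / r s) \<longlongrightarrow> \<eta>0) (at_right 0)"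
    using tip unfolding toy_tip_solution_def by blast
  have r2: "((\<lambda>s. (r s)\<^sup>2) \<longlongrightarrow> 0) (at_right 0)"
    using tip tendsto_power[of r 0 "at_right 0" 2] unfolding toy_tip_solution_def by simp
  have "H 0 = \<eta>0\<^sup>2"
  proof (rule isCont_value_eq_limit[OF _ r2])
    show "isCont H 0" using H \<open>0 < a\<close> by (intro real_analytic_on_imp_isCont) auto
    show "eventually (\<lambda>s. H ((r s)\<^sup>2) = (sqrt (1 - (\<rho> s)\<^sup>2) / r s)\<^sup>2) (at_right 0)"
      using H_r by (rule eventually_mono) blast
  qed (use \<eta>0 in \<open>auto intro: tendsto_intros\<close>)
  then obtain b where b: "0 < b" "b \<le> a"
    and K: "real_analytic_on (\<lambda>v. sqrt (H v)) {-b<..<b}"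
    using real_analytic_sqrt_near_0[OF H \<open>0 < a\<close>] \<open>\<eta>0 > 0\<close> by auto
  have "eventually (\<lambda>s. (r s)\<^sup>2 < b \<and> sqrt (1 - (\<rho> s)\<^sup>2) / r s = sqrt (H ((r s)\<^sup>2))) (at_right 0)"
    using H_r eventually_in_ivl0[OF s1_in] order_tendstoD(2)[OF r2 b(1)]
  proof eventually_elim
    case (elim s)
    then have "0 < \<rho> s" "\<rho> s < 1" "0 < r s" using in_M1 by (auto simp: M1_iff)
    then have "0 \<le> sqrt (1 - (\<rho> s)\<^sup>2) / r s" by (intro divide_nonneg_nonneg) (auto intro: power_le_one)
    then show ?case using elim by (metis real_sqrt_abs abs_of_nonneg)
  qed
  with b(1) K show ?thesis by (rule that)
qed

lemma toy_t_tip: "toy_t_tip_solution \<beta> g \<eta> w J"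
proof -
  obtain b K where "0 < b" and K: "real_analytic_on K {-b<..<b}"
    and prof: "eventually (\<lambda>s. (r s)\<^sup>2 < b \<and> sqrt (1 - (\<rho> s)\<^sup>2) / r s = K ((r s)\<^sup>2)) (at_right 0)"
    by (rule tip_profile_analytic)
  have "eventually (\<lambda>t. w t < b \<and> \<eta> t = K (w t)) at_bot"
    using filterlim_iff[THEN iffD1, OF ti_tendsto, rule_format, OF prof] by (simp add: Phi_def)
  then have "eventually (\<lambda>t. t \<in> J \<and> w t < b \<and> \<eta> t = K (w t)) at_bot"
    by (rule eventually_conj[OF eventually_in_J])
  then obtain t0 where t0: "\<And>t. t \<le> t0 \<Longrightarrow> t \<in> J \<and> w t < b \<and> \<eta> t = K (w t)"
    unfolding eventually_at_bot_linorder by blast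
  have "real_analytic_on K {-(w t0)<..<w t0}"
    using t0[of t0] by (intro real_analytic_on_subset[OF K]) (auto simp: Phi_def)
  moreover have "\<forall>t\<in>J. t < t0 \<longrightarrow> \<eta> t = K (w t)" using t0 by simp
  ultimately have "\<exists>t0\<in>J. \<exists>G. real_analytic_on G {-(w t0)<..<w t0} \<and> (\<forall>t\<in>J. t < t0 \<longrightarrow> \<eta> t = G (w t))"
    using t0[of t0] by blast
  moreover have "J \<noteq> {}" using s1_in by blast
  ultimately show ?thesis
    unfolding toy_t_tip_solution_def
    by (intro conjI allI J_interval J_open J_unbounded_below t_solution eta_tendsto w_tendsto)
qed

end

locale t_tip_to_tip =
  fixes \<beta> :: real and g \<eta> w :: "real \<Rightarrow> real" and J :: "real set"
    and \<sigma> \<rho>h rh :: "real \<Rightarrow> real"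
  assumes g_cont: "isCont g 0"
    and t_tip: "toy_t_tip_solution \<beta> g \<eta> w J"
    and M1_Phi: "\<forall>t\<in>J. (\<rho>h t, rh t) \<in> M1 \<and> Phi (\<rho>h t, rh t) = (\<eta> t, w t)"
    and sigma_deriv: "\<forall>t\<in>J. (\<sigma> has_real_derivative rh t / \<rho>h t) (at t)"
begin

lemma J_interval: "is_interval J" and J_open: "open J" and J_nonempty: "J \<noteq> {}"
  and J_unbounded_below: "\<exists>t\<in>J. t < x"
  using t_tip unfolding toy_t_tip_solution_def by blast+

lemma J_downward_closed: "t \<in> J \<Longrightarrow> u \<le> t \<Longrightarrow> u \<in> J"
  using J_interval J_unbounded_below by (rule downward_closed_if_interval_unbounded_below)

lemma eventually_in_J: "eventually (\<lambda>t. t \<in> J) at_bot"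
  using J_nonempty J_downward_closed unfolding eventually_at_bot_linorder by blast

lemma eta_deriv: "t \<in> J \<Longrightarrow> (\<eta> has_real_derivative eta_rhs \<beta> g (\<eta> t) (w t)) (at t)"
  and w_deriv: "t \<in> J \<Longrightarrow> (w has_real_derivative 2 * w t) (at t)"
  using t_tip unfolding toy_t_tip_solution_def t_solution_def by blast+

lemma in_M1: "t \<in> J \<Longrightarrow> (\<rho>h t, rh t) \<in> M1"
  and in_N0: "t \<in> J \<Longrightarrow> (\<eta> t, w t) \<in> N0"
  and rhoh_eq: "t \<in> J \<Longrightarrow> \<rho>h t = sqrt (1 - (\<eta> t)\<^sup>2 * w t)"
  and rh_eq: "t \<in> J \<Longrightarrow> rh t = sqrt (w t)"
  using M1_Phi Phi_M1(1)[of "\<rho>h t" "rh t"] Phi_M1_inverse[of "\<rho>h t" "rh t" "\<eta> t" "w t"] by auto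

lemma rh_deriv:
  assumes "t \<in> J" shows "(rh has_real_derivative rh t) (at t)"
proof -
  have "((\<lambda>t. sqrt (w t)) has_real_derivative sqrt (w t)) (at t)"
    using has_real_derivative_sqrt_along_t_solution[OF w_deriv[OF assms]] in_N0[OF assms]
    by (simp add: N0_def)
  then have "(rh has_real_derivative sqrt (w t)) (at t)"
    by (rule has_field_derivative_transform_within_open[OF _ J_open assms]) (simp add: rh_eq)
  then show ?thesis using rh_eq[OF assms] by simp
qed

lemma rhoh_deriv:
  assumes "t \<in> J"
  shows "(\<rho>h has_real_derivative toy_rhs \<beta> g (\<rho>h t) (rh t) * (rh t / \<rho>h t)) (at t)"
proof -
  have "(\<rho>h has_real_derivative toy_rhs \<beta> g (sqrt (1 - (\<eta> t)\<^sup>2 * w t)) (sqrt (w t)) *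
      (sqrt (w t) / sqrt (1 - (\<eta> t)\<^sup>2 * w t))) (at t)"
    using has_real_derivative_inverse_Phi_along_t_solution[OF eta_deriv w_deriv in_N0, OF assms assms assms]
    by (rule has_field_derivative_transform_within_open[OF _ J_open assms]) (simp add: rhoh_eq)
  then show ?thesis using rhoh_eq[OF assms] rh_eq[OF assms] by simp
qed

lemma sigma_deriv_at: "t \<in> J \<Longrightarrow> (\<sigma> has_real_derivative rh t / \<rho>h t) (at t)"
  using sigma_deriv by blast

lemma sigma_deriv_pos: "t \<in> J \<Longrightarrow> 0 < rh t / \<rho>h t"
  using in_M1 by (auto simp: M1_iff)

lemma sigma_strict_mono: "strict_mono_on J \<sigma>"
  using sigma_deriv sigma_deriv_pos by (intro strict_mono_on_of_deriv_pos[OF J_interval]) auto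

lemma sigma_continuous: "continuous_on J \<sigma>"
  using sigma_deriv by (intro continuous_at_imp_continuous_on) (auto intro: DERIV_isCont)

lemma sigma_diffeo: "diffeo_onto_range \<sigma> J"
proof (rule diffeo_onto_range_of_deriv_pos[OF J_interval J_open _ sigma_deriv_pos])
  show "(\<sigma> has_real_derivative rh t / \<rho>h t) (at t)" if "t \<in> J" for t
    using sigma_deriv that by blast
  have "isCont (\<lambda>t. rh t / \<rho>h t) t" if "t \<in> J" for t
    using DERIV_isCont[OF rh_deriv[OF that]] DERIV_isCont[OF rhoh_deriv[OF that]] in_M1[OF that]
    by (auto simp: M1_iff intro!: continuous_intros)
  then show "continuous_on J (\<lambda>t. rh t / \<rho>h t)"
    by (intro continuous_at_imp_continuous_on) auto
qed

lemma rhoh_tendsto: "(\<rho>h \<longlongrightarrow> 1) at_bot"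
proof -
  have "((\<lambda>t. sqrt (1 - (\<eta> t)\<^sup>2 * w t)) \<longlongrightarrow> sqrt (1 - (1/3)\<^sup>2 * 0)) at_bot"
    using t_tip unfolding toy_t_tip_solution_def by (intro tendsto_intros) auto
  moreover have "eventually (\<lambda>t. sqrt (1 - (\<eta> t)\<^sup>2 * w t) = \<rho>h t) at_bot"
    using eventually_in_J by (rule eventually_mono) (simp add: rhoh_eq)
  ultimately show ?thesis by (simp add: tendsto_cong)
qed

lemma rh_tendsto: "(rh \<longlongrightarrow> 0) at_bot"
proof -
  have "((\<lambda>t. sqrt (w t)) \<longlongrightarrow> sqrt 0) at_bot"
    using t_tip unfolding toy_t_tip_solution_def by (intro tendsto_intros) auto
  moreover have "eventually (\<lambda>t. sqrt (w t) = rh t) at_bot"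
    using eventually_in_J by (rule eventually_mono) (simp add: rh_eq)
  ultimately show ?thesis by (simp add: tendsto_cong)
qed

lemma sigma_bdd_below: "bdd_below (\<sigma> ` J)"
proof -
  \<comment> \<open>where \<open>\<rho>h > 1/2\<close>, \<open>\<sigma>' = rh / \<rho>h \<le> 2 rh = (2 rh)'\<close>, so \<open>\<sigma> - 2 rh\<close> is nonincreasing\<close>
  obtain T0 where T0: "\<And>t. t \<le> T0 \<Longrightarrow> \<rho>h t > 1/2"
    using order_tendstoD(1)[OF rhoh_tendsto, of "1/2"] unfolding eventually_at_bot_linorder by auto
  obtain T where T: "T \<in> J" "T < T0" using J_unbounded_below by blast
  have "\<sigma> T - 2 * rh T \<le> \<sigma> t" if "t \<in> J" for t
  proof (cases "t \<le> T")
    case True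
    have "\<sigma> T - 2 * rh T \<le> \<sigma> t - 2 * rh t"
    proof (rule DERIV_nonpos_imp_nonincreasing[OF True])
      fix u assume u: "t \<le> u" "u \<le> T"
      then have uJ: "u \<in> J" using J_downward_closed[OF T(1)] by blast
      have "((\<lambda>u. \<sigma> u - 2 * rh u) has_real_derivative rh u / \<rho>h u - 2 * rh u) (at u)"
        using sigma_deriv rh_deriv[OF uJ] uJ by (auto intro!: derivative_eq_intros)
      moreover have "rh u / \<rho>h u \<le> rh u / (1/2)"
        using in_M1[OF uJ] T0[of u] u T by (intro divide_left_mono) (auto simp: M1_iff)
      ultimately show "\<exists>y. ((\<lambda>u. \<sigma> u - 2 * rh u) has_real_derivative y) (at u) \<and> y \<le> 0"
        by (intro exI conjI) auto
    qed
    moreover have "0 < rh t" using in_M1[OF that] by (simp add: M1_iff)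
    ultimately show ?thesis by simp
  next
    case False
    then have "\<sigma> T \<le> \<sigma> t" using strict_mono_on_leD[OF sigma_strict_mono T(1) that] by simp
    moreover have "0 < rh T" using in_M1[OF T(1)] by (simp add: M1_iff)
    ultimately show ?thesis by simp
  qed
  then show ?thesis by (intro bdd_belowI2)
qed

definition s0 :: real where "s0 = Inf (\<sigma> ` J)"

lemma sigma_tendsto: "(\<sigma> \<longlongrightarrow> s0) at_bot"
  and sigma_gt_s0: "t \<in> J \<Longrightarrow> s0 < \<sigma> t"
proof -
  obtain t0 where "t0 \<in> J" using J_nonempty by blast
  note Inf = strict_mono_on_tendsto_Inf_at_bot[OF sigma_strict_mono _ this sigma_bdd_below]
  show "(\<sigma> \<longlongrightarrow> s0) at_bot" unfolding s0_def using J_downward_closed by (rule Inf(1))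
  show "t \<in> J \<Longrightarrow> s0 < \<sigma> t" unfolding s0_def using J_downward_closed by (rule Inf(2))
qed

lemma eta_eq: "t \<in> J \<Longrightarrow> \<eta> t = sqrt (1 - (\<rho>h t)\<^sup>2) / rh t"
  and w_eq: "t \<in> J \<Longrightarrow> w t = (rh t)\<^sup>2"
  using M1_Phi by (auto simp: Phi_def)

definition smax :: ereal where "smax = (SUP u\<in>\<sigma> ` J. ereal u) - ereal s0"

lemma ivl0_smax: "ivl0 smax = (\<lambda>s. s - s0) ` (\<sigma> ` J)" and smax_pos: "0 < smax"
proof -
  have I: "is_interval (\<sigma> ` J)" using J_interval sigma_continuous by (rule is_interval_continuous_image)
  have "open (\<sigma> ` J)" using sigma_diffeo unfolding diffeo_onto_range_def by blast
  moreover have "\<sigma> ` J \<noteq> {}" using J_nonempty by blast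
  moreover have "s0 < u" if "u \<in> \<sigma> ` J" for u using that sigma_gt_s0 by blast
  moreover have "\<exists>u\<in>\<sigma> ` J. u < x" if "s0 < x" for x
  proof -
    have "eventually (\<lambda>t. t \<in> J \<and> \<sigma> t < x) at_bot"
      using eventually_in_J order_tendstoD(2)[OF sigma_tendsto that] by (rule eventually_conj)
    then show ?thesis
      using eventually_happens'[of "at_bot :: real filter"] by force
  qed
  ultimately show "ivl0 smax = (\<lambda>s. s - s0) ` (\<sigma> ` J)" "0 < smax"
    unfolding smax_def using ivl0_eq_translated_interval[OF I] by blast+
qed

abbreviation "ti \<equiv> the_inv_into J \<sigma>"
abbreviation "\<rho> \<equiv> \<lambda>s. \<rho>h (ti (s + s0))"
abbreviation "r \<equiv> \<lambda>s. rh (ti (s + s0))"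

lemma ti_in_J: "u \<in> \<sigma> ` J \<Longrightarrow> ti u \<in> J"
  and sigma_ti: "u \<in> \<sigma> ` J \<Longrightarrow> \<sigma> (ti u) = u"
  using the_inv_into_into[OF strict_mono_on_imp_inj_on[OF sigma_strict_mono]]
    f_the_inv_into_f[OF strict_mono_on_imp_inj_on[OF sigma_strict_mono]] by auto

lemma shift_in_image: "s \<in> ivl0 smax \<Longrightarrow> s + s0 \<in> \<sigma> ` J"
  unfolding ivl0_smax by auto

lemma ti_shift_deriv:
  assumes "s \<in> ivl0 smax"
  shows "((\<lambda>s. ti (s + s0)) has_real_derivative inverse (r s / \<rho> s)) (at s)"
proof -
  note u = shift_in_image[OF assms]
  have "(ti has_real_derivative inverse (r s / \<rho> s)) (at (\<sigma> (ti (s + s0))))"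
    using has_real_derivative_the_inv_into[OF J_open strict_mono_on_imp_inj_on[OF sigma_strict_mono]
        sigma_continuous ti_in_J[OF u] sigma_deriv_at[OF ti_in_J[OF u]]] in_M1[OF ti_in_J[OF u]]
    by (simp add: M1_iff)
  then have "(ti has_real_derivative inverse (r s / \<rho> s)) (at (s + s0))"
    using sigma_ti[OF u] by simp
  moreover have "((\<lambda>s. s + s0) has_real_derivative 1) (at s)"
    by (auto intro!: derivative_eq_intros)
  ultimately have "((\<lambda>s. ti (s + s0)) has_real_derivative inverse (r s / \<rho> s) * 1) (at s)"
    by (rule DERIV_chain2)
  then show ?thesis by simp
qed

lemma toy_solution: "toy_solution \<beta> g \<rho> r (ivl0 smax)"
  unfolding toy_solution_def
proof (intro ballI conjI)
  fix s assume s: "s \<in> ivl0 smax"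
  note t = ti_in_J[OF shift_in_image[OF s]]
  show "(\<rho> s, r s) \<in> M0" using in_M1[OF t] by (auto simp: M1_def M0_def)
  have "r s / \<rho> s \<noteq> 0" using in_M1[OF t] by (simp add: M1_iff)
  then show "(\<rho> has_real_derivative toy_rhs \<beta> g (\<rho> s) (r s)) (at s)"
    using DERIV_chain2[OF rhoh_deriv[OF t] ti_shift_deriv[OF s]] by simp
  show "(r has_real_derivative \<rho> s) (at s)"
    using DERIV_chain2[OF rh_deriv[OF t] ti_shift_deriv[OF s]] in_M1[OF t] by (simp add: M1_iff)
qed

lemma eventually_in_ivl0_smax: "eventually (\<lambda>s. s \<in> ivl0 smax) (at_right 0)"
proof -
  obtain t where "t \<in> J" using J_nonempty by blast
  then have "\<sigma> t - s0 \<in> ivl0 smax" unfolding ivl0_smax by auto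
  then show ?thesis by (rule eventually_in_ivl0)
qed

lemma ti_shift_tendsto: "filterlim (\<lambda>s. ti (s + s0)) at_bot (at_right 0)"
proof -
  have "eventually (\<lambda>u. u \<in> \<sigma> ` J) (at_right s0)"
    unfolding eventually_at_right_to_0[of _ s0]
    using eventually_in_ivl0_smax by (rule eventually_mono) (rule shift_in_image)
  with filterlim_the_inv_into_at_bot[OF sigma_strict_mono J_unbounded_below sigma_gt_s0]
  show ?thesis unfolding filterlim_at_right_to_0[of _ _ s0] by blast
qed

lemma eventually_ti_shift: "eventually P at_bot \<Longrightarrow> eventually (\<lambda>s. P (ti (s + s0))) (at_right 0)"
  using ti_shift_tendsto unfolding filterlim_iff by blast

lemma rho_tendsto: "(\<rho> \<longlongrightarrow> 1) (at_right 0)"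
  using filterlim_compose[OF rhoh_tendsto ti_shift_tendsto] .

lemma r_tendsto: "(r \<longlongrightarrow> 0) (at_right 0)"
  using filterlim_compose[OF rh_tendsto ti_shift_tendsto] .

lemma eventually_shift_in_J: "eventually (\<lambda>s. ti (s + s0) \<in> J) (at_right 0)"
  using eventually_in_ivl0_smax by (rule eventually_mono) (rule ti_in_J[OF shift_in_image])

lemma profile_tendsto: "((\<lambda>s. sqrt (1 - (\<rho> s)\<^sup>2) / r s) \<longlongrightarrow> 1/3) (at_right 0)"
proof -
  have "((\<lambda>s. \<eta> (ti (s + s0))) \<longlongrightarrow> 1/3) (at_right 0)"
    using t_tip unfolding toy_t_tip_solution_def by (blast intro: filterlim_compose[OF _ ti_shift_tendsto])
  moreover have "eventually (\<lambda>s. \<eta> (ti (s + s0)) = sqrt (1 - (\<rho> s)\<^sup>2) / r s) (at_right 0)"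
    using eventually_shift_in_J by (rule eventually_mono) (rule eta_eq)
  ultimately show ?thesis by (simp add: tendsto_cong)
qed

lemma rho_analytic_in_r_squared:
  "\<exists>s1. s1 \<in> ivl0 smax \<and>
     (\<exists>G. real_analytic_on G {-((r s1)\<^sup>2)<..<(r s1)\<^sup>2} \<and> (\<forall>v\<in>{-((r s1)\<^sup>2)<..<(r s1)\<^sup>2}. G v > 0) \<and>
          (\<forall>s\<in>{0<..<s1}. \<rho> s = G ((r s)\<^sup>2)))"
proof -
  obtain t1 Ge where t1: "t1 \<in> J" and Ge: "real_analytic_on Ge {-(w t1)<..<w t1}"
    and Ge_eq: "\<And>t. t \<in> J \<Longrightarrow> t < t1 \<Longrightarrow> \<eta> t = Ge (w t)"
    using t_tip unfolding toy_t_tip_solution_def by blast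
  have "0 < w t1" using in_N0[OF t1] by (simp add: N0_def)
  \<comment> \<open>\<open>\<rho> = sqrt (1 - \<eta>\<^sup>2 w)\<close> and \<open>\<eta> = Ge w\<close>, with \<open>w = r\<^sup>2\<close>\<close>
  have "real_analytic_on (\<lambda>v. 1 - v * (Ge v * Ge v)) {-(w t1)<..<w t1}"
    using Ge by (intro real_analytic_on_diff real_analytic_on_mult real_analytic_on_const
        real_analytic_on_ident)
  from real_analytic_sqrt_near_0[OF this \<open>0 < w t1\<close>]
  obtain b where b: "0 < b" "b \<le> w t1" and pos: "\<And>v. v \<in> {-b<..<b} \<Longrightarrow> 0 < 1 - v * (Ge v * Ge v)"
    and K: "real_analytic_on (\<lambda>v. sqrt (1 - v * (Ge v * Ge v))) {-b<..<b}"
    by auto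
  have "eventually (\<lambda>t. t < t1) at_bot"
    unfolding eventually_at_bot_linorder by (intro exI[of _ "t1 - 1"]) auto
  moreover have "eventually (\<lambda>t. w t < b) at_bot"
    using t_tip b(1) unfolding toy_t_tip_solution_def by (blast intro: order_tendstoD(2))
  ultimately have "eventually (\<lambda>s. s \<in> ivl0 smax \<and> ti (s + s0) < t1 \<and> w (ti (s + s0)) < b) (at_right 0)"
    using eventually_in_ivl0_smax by (intro eventually_conj eventually_ti_shift)
  then obtain d where d: "0 < d"
    and near: "\<And>s. 0 < s \<Longrightarrow> s < d \<Longrightarrow> s \<in> ivl0 smax \<and> ti (s + s0) < t1 \<and> w (ti (s + s0)) < b"
    unfolding eventually_at_right_field by blast
  have r_sq: "(r s)\<^sup>2 = w (ti (s + s0))" "ti (s + s0) \<in> J" if "s \<in> ivl0 smax" for s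
    using w_eq[OF ti_in_J[OF shift_in_image[OF that]]] ti_in_J[OF shift_in_image[OF that]] by simp_all
  define s1 where "s1 = d / 2"
  have s1: "0 < s1" "s1 < d" using d by (auto simp: s1_def)
  have "(r s1)\<^sup>2 < b" using near[OF s1] r_sq by auto
  moreover have "\<rho> s = sqrt (1 - (r s)\<^sup>2 * (Ge ((r s)\<^sup>2) * Ge ((r s)\<^sup>2)))" if "s \<in> {0<..<s1}" for s
  proof -
    have s: "s \<in> ivl0 smax" "ti (s + s0) < t1" using near[of s] that s1 by auto
    then show ?thesis
      using rhoh_eq[OF r_sq(2)[OF s(1)]] Ge_eq[OF r_sq(2)[OF s(1)] s(2)] r_sq(1)[OF s(1)]
      by (simp add: power2_eq_square mult_ac)
  qed
  ultimately show ?thesis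
    using near[OF s1] pos by (intro exI[of _ s1] conjI exI[of _ "\<lambda>v. sqrt (1 - v * (Ge v * Ge v))"]
        ballI real_analytic_on_subset[OF K]) auto
qed

lemma rho_decreasing_near_0: "\<exists>s1>0. ereal s1 \<le> smax \<and> (\<forall>s\<in>{0<..<s1}. deriv \<rho> s < 0 \<and> \<rho> s > 0)"
proof -
  \<comment> \<open>\<open>\<rho>' = 3/2 (1 - \<rho>\<^sup>2) / r \<cdot> B\<close> and \<open>B \<rightarrow> -1 + 1/3 = -2/3\<close> at the tip\<close>
  define B where "B = (\<lambda>s. -1 + sqrt (1 - (\<rho> s)\<^sup>2) / r s * (\<beta> * (r s)\<^sup>2 * g ((r s)\<^sup>2) + \<rho> s))"
  have r2: "((\<lambda>s. (r s)\<^sup>2) \<longlongrightarrow> 0) (at_right 0)"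
    using tendsto_power[OF r_tendsto, of 2] by simp
  have "(B \<longlongrightarrow> -1 + 1/3 * (\<beta> * 0 * g 0 + 1)) (at_right 0)"
    unfolding B_def
    by (intro tendsto_intros profile_tendsto r2 rho_tendsto isCont_tendsto_compose[OF g_cont r2])
  then have "eventually (\<lambda>s. B s < 0) (at_right 0)"
    by (rule order_tendstoD(2)) simp
  with eventually_in_ivl0_smax have "eventually (\<lambda>s. s \<in> ivl0 smax \<and> B s < 0) (at_right 0)"
    by (rule eventually_conj)
  then obtain d where d: "0 < d" and near: "\<And>s. 0 < s \<Longrightarrow> s < d \<Longrightarrow> s \<in> ivl0 smax \<and> B s < 0"
    unfolding eventually_at_right_field by blast
  define s1 where "s1 = d / 2"
  have s1: "0 < s1" "s1 < d" using d by (auto simp: s1_def)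
  have "deriv \<rho> s < 0 \<and> \<rho> s > 0" if "s \<in> {0<..<s1}" for s
  proof -
    have s: "s \<in> ivl0 smax" "B s < 0" using near[of s] that s1 by auto
    then have "0 < \<rho> s" "\<rho> s < 1" "0 < r s"
      using in_M1[OF ti_in_J[OF shift_in_image[OF s(1)]]] by (auto simp: M1_iff)
    then have "0 < 3/2 * (1 - (\<rho> s)\<^sup>2) / r s" by (simp add: power_less_one_iff)
    then have "3/2 * (1 - (\<rho> s)\<^sup>2) / r s * B s < 0" using s(2) by (rule mult_pos_neg)
    moreover have "deriv \<rho> s = 3/2 * (1 - (\<rho> s)\<^sup>2) / r s * B s"
      using toy_solution s(1) unfolding toy_solution_def B_def toy_rhs_def
      by (auto intro!: DERIV_imp_deriv)
    ultimately show ?thesis using \<open>0 < \<rho> s\<close> by simp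
  qed
  moreover have "ereal s1 \<le> smax" using near[OF s1] by (auto simp: ivl0_def)
  ultimately show ?thesis using s1(1) by blast
qed

lemma toy_tip: "toy_tip_solution \<beta> g \<rho> r smax"
proof -
  have "\<exists>\<eta>0>0. ((\<lambda>s. sqrt (1 - (\<rho> s)\<^sup>2) / r s) \<longlongrightarrow> \<eta>0) (at_right 0)"
    using profile_tendsto by (intro exI[of _ "1/3"]) simp
  then show ?thesis
    unfolding toy_tip_solution_def
    by (intro conjI smax_pos toy_solution rho_tendsto r_tendsto rho_analytic_in_r_squared
        rho_decreasing_near_0)
qed

end

theorem lemmaA1:
  fixes g :: "real \<Rightarrow> real" and \<beta> :: real
  assumes g_an: "real_analytic_on g UNIV"
    and g_pos: "\<forall>v>0. g v > 0"
  shows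
   "(\<forall>\<rho> r smax sstar s1 \<tau>.
       toy_tip_solution \<beta> g \<rho> r smax \<and> 0 < sstar \<and> sstar \<le> smax \<and>
       (\<forall>s\<in>ivl0 sstar. \<rho> s > 0) \<and> s1 \<in> ivl0 sstar \<and>
       (\<forall>s\<in>ivl0 sstar. (\<tau> has_real_derivative \<rho> s / r s) (at s)) \<and> \<tau> s1 = 0
       \<longrightarrow>
       diffeo_onto_range \<tau> (ivl0 sstar) \<and>
       filterlim \<tau> at_bot (at_right 0) \<and>
       toy_t_tip_solution \<beta> g
         (\<lambda>t. fst (Phi (\<rho> (the_inv_into (ivl0 sstar) \<tau> t), r (the_inv_into (ivl0 sstar) \<tau> t))))
         (\<lambda>t. snd (Phi (\<rho> (the_inv_into (ivl0 sstar) \<tau> t), r (the_inv_into (ivl0 sstar) \<tau> t))))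
         (\<tau> ` ivl0 sstar))
    \<and>
    (\<forall>\<eta> w J t0 \<sigma> \<rho>h rh.
       toy_t_tip_solution \<beta> g \<eta> w J \<and> (\<forall>t\<in>J. (\<eta> t, w t) \<in> N0) \<and>
       (\<forall>t\<in>J. (\<rho>h t, rh t) \<in> M1 \<and> Phi (\<rho>h t, rh t) = (\<eta> t, w t)) \<and>
       t0 \<in> J \<and>
       (\<forall>t\<in>J. (\<sigma> has_real_derivative rh t / \<rho>h t) (at t)) \<and> \<sigma> t0 = 0
       \<longrightarrow>
       diffeo_onto_range \<sigma> J \<and>
       (\<exists>s0::real. (\<sigma> \<longlongrightarrow> s0) at_bot \<and>
          (\<exists>smax. ivl0 smax = (\<lambda>s. s - s0) ` (\<sigma> ` J) \<and>
             toy_tip_solution \<beta> g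
               (\<lambda>s. \<rho>h (the_inv_into J \<sigma> (s + s0)))
               (\<lambda>s. rh (the_inv_into J \<sigma> (s + s0))) smax)))"
proof -
  \<comment> \<open>of \<open>g\<close> only its continuity at 0 is used\<close>
  have g_cont: "isCont g 0" using g_an by (rule real_analytic_on_imp_isCont) simp
  show ?thesis
  proof (rule conjI, goal_cases)
    case 1
    show ?case
    proof (intro allI impI, goal_cases)
      case (1 \<rho> r smax sstar s1 \<tau>)
      then interpret tip_to_t_tip \<beta> g \<rho> r smax sstar s1 \<tau>
        using g_cont by unfold_locales blast+
      show ?case using tau_diffeo tau_tendsto_at_bot toy_t_tip by blast
    qed
  next
    case 2
    show ?case
    proof (intro allI impI, goal_cases)
      case (1 \<eta> w J t0 \<sigma> \<rho>h rh)
      then interpret t_tip_to_tip \<beta> g \<eta> w J \<sigma> \<rho>h rh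
        using g_cont by unfold_locales blast+
      show ?case using sigma_diffeo sigma_tendsto ivl0_smax toy_tip by blast
    qed
  qed
qed

end
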